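(* Let $h$ be a probability density on $\mathbb{R}^n$, $0\le c_1<1<c_2$ with $\frac{c_2-c_1}{1-c_1}\in\mathbb{N}$, $\tilde{\mathcal{P}}=\tilde{\mathcal{P}}_{c_1,c_2,h}$, and $\varepsilon\ge0$ such that there exists $\beta\ge0$ with $1+g_\varepsilon^*(-e^\beta)\le\frac{(c_2-c_1e^\beta)(1-c_1)}{c_2-c_1}$. Let $\lambda^\star=\frac{e^\varepsilon-1}{(1-c_1)e^\varepsilon+c_2-1}$ and let $\mathbf{Q}^\star$ map $P\in\tilde{\mathcal{P}}$ with density $p$ to the continuous distribution with density $\lambda^\star p(x)+(1-\lambda^\star)h(x)$. Then $\mathbf{Q}^\star$ satisfies $g_\varepsilon$-FLDP and for every $f$-divergence \[ \sup_{P\in\tilde{\mathcal{P}}}D_f(P\|\mathbf{Q}^\star(P))=\mathcal{R}(\mathcal{Q}_{\mathbb{R}^n,\tilde{\mathcal{P}},g_\varepsilon},\tilde{\mathcal{P}},f)=\frac{1-r_1}{r_2-r_1}f(r_2)+\frac{r_2-1}{r_2-r_1}f(r_1), \] with $r_1=c_1\cdot\frac{(1-c_1)e^\varepsilon+c_2-1}{c_2-c_1}$ and $r_2=\frac{c_2}{c_2-c_1}\cdot\frac{(1-c_1)e^\varepsilon+c_2-1}{e^\varepsilon}$.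
   Context: $g_\varepsilon(\theta)=\max\{0,1-e^\varepsilon\theta,e^{-\varepsilon}(1-\theta)\}$ on $[0,1]$; $g_\varepsilon$-FLDP is equivalent to $\varepsilon$-LDP: $\mathbf{Q}(A\mid P)\le e^\varepsilon\mathbf{Q}(A\mid P')$ for all $P,P'$ and measurable $A$. A sampler is a map $\mathbf{Q}:\tilde{\mathcal{P}}\to\mathcal{P}(\mathbb{R}^n)$. Trade-off function $T(P,Q)(u)=\inf_\phi\{1-\mathbb{E}_Q[\phi]:\mathbb{E}_P[\phi]\le u\}$ over measurable $\phi$ with values in $[0,1]$; $\mathbf{Q}$ satisfies $g$-FLDP if $T(\mathbf{Q}(P),\mathbf{Q}(P'))(u)\ge g(u)$ for all $P,P'\in\tilde{\mathcal{P}}$ and $u\in[0,1]$; $\mathcal{Q}_{\mathbb{R}^n,\tilde{\mathcal{P}},g}$ is the set of such samplers. $g^*(y)=\sup_{x\in[0,1]}\{xy-g(x)\}$. $\tilde{\mathcal{P}}_{c_1,c_2,h}=\{P\text{ with density }p: c_1h\le p\le c_2h\text{ pointwise}\}$. $D_f(P\|Q)=\int qf(p/q)$ for convex $f:(0,\infty)\to\mathbb{R}$, $f(1)=0$, with $f(0)=\lim_{t\to0^+}f(t)$, $0f(0/0)=0$, $0f(a/0)=a\lim_{u\to\infty}f(u)/u$. $\mathcal{R}(\mathcal{Q}_{\mathbb{R}^n,\tilde{\mathcal{P}},g},\mathcal{S},f)=\inf_{\mathbf{Q}\in\mathcal{Q}_{\mathbb{R}^n,\tilde{\mathcal{P}},g}}\sup_{P\in\mathcal{S}}D_f(P\|\mathbf{Q}(P))$.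 *)

theory Defs
  imports "HOL-Probability.Probability"
begin

definition g_eps :: "real \<Rightarrow> real \<Rightarrow> real" where
  "g_eps \<epsilon> \<theta> = max 0 (max (1 - exp \<epsilon> * \<theta>) (exp (- \<epsilon>) * (1 - \<theta>)))"

definition conj01 :: "(real \<Rightarrow> real) \<Rightarrow> real \<Rightarrow> real" where
  "conj01 g y = (SUP x\<in>{0..1}. x * y - g x)"

definition tradeoff :: "'a measure \<Rightarrow> 'a measure \<Rightarrow> real \<Rightarrow> real" where
  "tradeoff P Q u = Inf {1 - (\<integral>x. \<phi> x \<partial>Q) | \<phi>.
      \<phi> \<in> borel_measurable P \<and> (\<forall>x. 0 \<le> \<phi> x \<and> \<phi> x \<le> 1) \<and> (\<integral>x. \<phi> x \<partial>P) \<le> u}"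

text \<open>A sampler on R^n (here: a Euclidean space 'a with Lebesgue/Borel structure)
  maps each distribution of the class to a Borel probability measure.\<close>
definition is_sampler :: "'a::euclidean_space measure set \<Rightarrow> ('a measure \<Rightarrow> 'a measure) \<Rightarrow> bool" where
  "is_sampler Ps Q \<longleftrightarrow> (\<forall>P\<in>Ps. prob_space (Q P) \<and> sets (Q P) = sets borel)"

definition fldp :: "(real \<Rightarrow> real) \<Rightarrow> 'a measure set \<Rightarrow> ('a measure \<Rightarrow> 'a measure) \<Rightarrow> bool" where
  "fldp g Ps Q \<longleftrightarrow> (\<forall>P\<in>Ps. \<forall>P'\<in>Ps. \<forall>u\<in>{0..1}. tradeoff (Q P) (Q P') u \<ge> g u)"

definition samplers :: "'a::euclidean_space measure set \<Rightarrow> (real \<Rightarrow> real) \<Rightarrow> ('a measure \<Rightarrow> 'a measure) set" where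
  "samplers Ps g = {Q. is_sampler Ps Q \<and> fldp g Ps Q}"

definition is_density :: "('a::euclidean_space \<Rightarrow> real) \<Rightarrow> bool" where
  "is_density p \<longleftrightarrow> p \<in> borel_measurable borel \<and> (\<forall>x. 0 \<le> p x)
      \<and> (\<integral>\<^sup>+ x. ennreal (p x) \<partial>lborel) = 1"

definition Pclass :: "real \<Rightarrow> real \<Rightarrow> ('a::euclidean_space \<Rightarrow> real) \<Rightarrow> 'a measure set" where
  "Pclass c1 c2 h = {density lborel (\<lambda>x. ennreal (p x)) | p.
      is_density p \<and> (\<forall>x. c1 * h x \<le> p x \<and> p x \<le> c2 * h x)}"

definition f_zero :: "(real \<Rightarrow> real) \<Rightarrow> ereal" where
  "f_zero f = Lim (at_right 0) (\<lambda>t. ereal (f t))"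

definition f_slope_inf :: "(real \<Rightarrow> real) \<Rightarrow> ereal" where
  "f_slope_inf f = Lim at_top (\<lambda>u. ereal (f u / u))"

definition f_ext :: "(real \<Rightarrow> real) \<Rightarrow> real \<Rightarrow> ereal" where
  "f_ext f t = (if 0 < t then ereal (f t) else f_zero f)"

text \<open>The integrand q f(p/q) with the conventions 0 f(0/0) = 0 and 0 f(a/0) = a f'(\<infinity>).\<close>
definition f_persp :: "(real \<Rightarrow> real) \<Rightarrow> real \<Rightarrow> real \<Rightarrow> ereal" where
  "f_persp f a b =
     (if 0 < b then (if 0 < a then ereal (b * f (a / b)) else ereal b * f_zero f)
      else (if 0 < a then ereal a * f_slope_inf f else 0))"

definition sum_meas :: "'a measure \<Rightarrow> 'a measure \<Rightarrow> 'a measure" where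
  "sum_meas P Q = measure_of (space P) (sets P) (\<lambda>A. emeasure P A + emeasure Q A)"

definition fdiv :: "(real \<Rightarrow> real) \<Rightarrow> 'a measure \<Rightarrow> 'a measure \<Rightarrow> ereal" where
  "fdiv f P Q =
     (let \<mu> = sum_meas P Q;
          p = (\<lambda>x. enn2real (RN_deriv \<mu> P x));
          q = (\<lambda>x. enn2real (RN_deriv \<mu> Q x));
          \<psi> = (\<lambda>x. f_persp f (p x) (q x))
      in enn2ereal (\<integral>\<^sup>+ x. e2ennreal (\<psi> x) \<partial>\<mu>) - enn2ereal (\<integral>\<^sup>+ x. e2ennreal (- \<psi> x) \<partial>\<mu>))"

definition minimax_risk :: "('a::euclidean_space measure \<Rightarrow> 'a measure) set \<Rightarrow> 'a measure set \<Rightarrow> (real \<Rightarrow> real) \<Rightarrow> ereal" where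
  "minimax_risk Qs S f = (INF Q\<in>Qs. SUP P\<in>S. fdiv f P (Q P))"

end

theory Submission
  imports Defs
begin

text \<open>
  The mixture \<open>Q\<^sup>\<star>(P) = \<lambda> P + (1 - \<lambda>) H\<close> satisfies \<open>r\<^sub>1 \<le> dP/dQ\<^sup>\<star>(P) \<le> r\<^sub>2\<close> whenever
  \<open>c\<^sub>1 h \<le> p \<le> c\<^sub>2 h\<close>, and \<open>\<lambda>\<close> is chosen so that the extreme mixture densities have ratio
  exactly \<open>e\<^sup>\<epsilon>\<close>, which makes \<open>Q\<^sup>\<star>\<close> \<open>\<epsilon>\<close>-LDP. For a pair with density ratio in \<open>[r\<^sub>1, r\<^sub>2]\<close>,
  convexity bounds \<open>D\<^sub>f\<close> by the chord of \<open>f\<close> through \<open>r\<^sub>1\<close> and \<open>r\<^sub>2\<close>, evaluated at \<open>1\<close>.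

  Conversely, split the \<open>h\<close>-mass into \<open>k = (c\<^sub>2 - c\<^sub>1) / (1 - c\<^sub>1)\<close> equal slabs \<open>A\<^sub>i\<close> and let
  \<open>P\<^sub>i\<close> have density \<open>c\<^sub>2 h\<close> on \<open>A\<^sub>i\<close> and \<open>c\<^sub>1 h\<close> elsewhere. An \<open>\<epsilon>\<close>-LDP sampler gives the slabs
  average mass \<open>Q(P\<^sub>i)(A\<^sub>i) \<le> e\<^sup>\<epsilon> / (k - 1 + e\<^sup>\<epsilon>)\<close>, and testing \<open>D\<^sub>f(P\<^sub>i \<parallel> Q(P\<^sub>i))\<close> against
  supporting lines of \<open>f\<close> at \<open>r\<^sub>1\<close> and \<open>r\<^sub>2\<close> recovers the same chord value. The hypothesis on \<open>\<beta>\<close>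
  enters only through its consequence \<open>c\<^sub>1 e\<^sup>\<epsilon> \<le> c\<^sub>2\<close>, i.e. \<open>0 \<le> \<lambda> \<le> 1\<close>.
\<close>

section \<open>Extended integrals and the dominating measure\<close>

definition ext_integral :: "'a measure \<Rightarrow> ('a \<Rightarrow> ereal) \<Rightarrow> ereal" where
  "ext_integral M \<psi> =
     enn2ereal (\<integral>\<^sup>+ x. e2ennreal (\<psi> x) \<partial>M) - enn2ereal (\<integral>\<^sup>+ x. e2ennreal (- \<psi> x) \<partial>M)"

lemma ext_integral_mono_AE:
  assumes "AE x in M. \<psi> x \<le> \<psi>' x"
  shows "ext_integral M \<psi> \<le> ext_integral M \<psi>'"
proof -
  have "(\<integral>\<^sup>+ x. e2ennreal (\<psi> x) \<partial>M) \<le> (\<integral>\<^sup>+ x. e2ennreal (\<psi>' x) \<partial>M)"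
    using assms by (intro nn_integral_mono_AE) (auto elim!: eventually_mono intro: e2ennreal_mono)
  moreover have "(\<integral>\<^sup>+ x. e2ennreal (- \<psi>' x) \<partial>M) \<le> (\<integral>\<^sup>+ x. e2ennreal (- \<psi> x) \<partial>M)"
    using assms by (intro nn_integral_mono_AE) (auto elim!: eventually_mono intro: e2ennreal_mono)
  ultimately show ?thesis
    unfolding ext_integral_def by (intro ereal_minus_mono) (auto simp: less_eq_ennreal.rep_eq)
qed

lemma ext_integral_ereal:
  assumes "integrable M \<phi>"
  shows "ext_integral M (\<lambda>x. ereal (\<phi> x)) = ereal (integral\<^sup>L M \<phi>)"
proof -
  have "(\<integral>\<^sup>+ x. ennreal (\<phi> x) \<partial>M) \<noteq> \<infinity>" "(\<integral>\<^sup>+ x. ennreal (- \<phi> x) \<partial>M) \<noteq> \<infinity>"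
    using assms unfolding real_integrable_def by auto
  moreover have "enn2ereal X = ereal (enn2real X)" if "X \<noteq> \<infinity>" for X
    using that by (cases X) auto
  ultimately show ?thesis
    unfolding ext_integral_def real_lebesgue_integral_def[OF assms] by simp
qed

lemma
  assumes "finite_measure P" "finite_measure Q" "sets Q = sets P"
  shows sets_sum_meas: "sets (sum_meas P Q) = sets P"
    and space_sum_meas: "space (sum_meas P Q) = space P"
    and emeasure_sum_meas: "A \<in> sets P \<Longrightarrow> emeasure (sum_meas P Q) A = emeasure P A + emeasure Q A"
proof -
  show "sets (sum_meas P Q) = sets P"
    unfolding sum_meas_def by (simp add: sets.sigma_sets_eq sets.space_closed)
  then show "space (sum_meas P Q) = space P"
    unfolding sum_meas_def by (simp add: space_measure_of_conv)
  have "countably_additive (sets P) (\<lambda>A. emeasure P A + emeasure Q A)"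
    unfolding countably_additive_def
  proof (intro allI impI)
    fix F :: "nat \<Rightarrow> _"
    assume F: "range F \<subseteq> sets P" "disjoint_family F" "\<Union> (range F) \<in> sets P"
    have "(\<Sum>i. emeasure P (F i) + emeasure Q (F i)) = (\<Sum>i. emeasure P (F i)) + (\<Sum>i. emeasure Q (F i))"
      by (rule suminf_add[symmetric]) auto
    also have "\<dots> = emeasure P (\<Union> (range F)) + emeasure Q (\<Union> (range F))"
      using F assms(3) by (simp add: suminf_emeasure)
    finally show "(\<Sum>i. emeasure P (F i) + emeasure Q (F i)) = emeasure P (\<Union> (range F)) + emeasure Q (\<Union> (range F))" .
  qed
  then show "A \<in> sets P \<Longrightarrow> emeasure (sum_meas P Q) A = emeasure P A + emeasure Q A"
    unfolding sum_meas_def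
    by (subst emeasure_measure_of_sigma) (auto simp: sets.sigma_algebra_axioms positive_def)
qed

lemma RN_deriv_indicator:
  assumes "finite_measure M" "finite_measure N" "absolutely_continuous M N" "sets N = sets M"
    and B: "B \<in> sets M"
  shows "integrable M (\<lambda>x. enn2real (RN_deriv M N x) * indicator B x)"
    and "(\<integral>x. enn2real (RN_deriv M N x) * indicator B x \<partial>M) = measure N B"
proof -
  interpret M: finite_measure M by fact
  have sf: "sigma_finite_measure N" using assms(2) by (rule finite_measure.axioms(1))
  have "integrable N (indicator B :: _ \<Rightarrow> real)"
    using B assms(4) finite_measure.emeasure_finite[OF assms(2), of B] by (simp add: less_top)
  then show "integrable M (\<lambda>x. enn2real (RN_deriv M N x) * indicator B x)"
    using M.RN_deriv_integrable[OF sf assms(3,4)] B by simp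
  have BN: "B \<in> sets N" using B assms(4) by simp
  then have "measure N B = integral\<^sup>L N (indicator B)"
    using sets.sets_into_space[OF BN] by (simp add: Int_absorb2)
  also have "\<dots> = (\<integral>x. enn2real (RN_deriv M N x) * indicator B x \<partial>M)"
    using B by (intro M.RN_deriv_integral[OF sf assms(3,4)]) simp
  finally show "(\<integral>x. enn2real (RN_deriv M N x) * indicator B x \<partial>M) = measure N B" ..
qed

section \<open>Convex functions on the positive half-line\<close>

lemma convex_on_slope_mono:
  fixes f :: "real \<Rightarrow> real"
  assumes cf: "convex_on {0<..} f" and c: "0 < c" and xy: "0 < x" "x < y" "x \<noteq> c" "y \<noteq> c"
  shows "(f x - f c) / (x - c) \<le> (f y - f c) / (y - c)"
proof -
  have flip: "(f u - f v) / (u - v) = (f v - f u) / (v - u)" for u v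
    by (metis minus_diff_eq minus_divide_divide)
  have pos: "x \<in> {0<..}" "y \<in> {0<..}" "c \<in> {0<..}" using c xy by auto
  consider "y < c" | "x < c" "c < y" | "c < x" using xy by linarith
  then show ?thesis
  proof cases
    case 1
    then show ?thesis using convex_on_slope_le(2)[OF cf pos(1,3) xy(2)] by simp
  next
    case 2
    then show ?thesis
      using convex_on_slope_le[OF cf pos(1,2) 2] unfolding flip[of c y] by linarith
  next
    case 3
    then show ?thesis
      using convex_on_slope_le(1)[OF cf pos(3,2) 3 xy(2)] unfolding flip[of c x] flip[of c y] by simp
  qed
qed

lemma convex_on_supporting_line:
  fixes f :: "real \<Rightarrow> real"
  assumes cf: "convex_on {0<..} f" and r: "0 < r"
  obtains g where "\<And>t. 0 < t \<Longrightarrow> f r + g * (t - r) \<le> f t"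
proof -
  define S where "S = (\<lambda>s. (f s - f r) / (s - r)) ` {0<..<r}"
  have slope_le: "(f s - f r) / (s - r) \<le> (f t - f r) / (t - r)" if "0 < s" "s < r" "r < t" for s t
    using convex_on_slope_mono[OF cf r, of s t] that by auto
  have bdd: "bdd_above S"
    unfolding S_def using slope_le[of _ "r + 1"] r by (intro bdd_aboveI[of _ "f (r + 1) - f r"]) auto
  have "S \<noteq> {}" unfolding S_def using r by auto
  show ?thesis
  proof
    fix t :: real assume t: "0 < t"
    consider "t < r" | "t = r" | "r < t" by linarith
    then show "f r + Sup S * (t - r) \<le> f t"
    proof cases
      case 1
      have "(f t - f r) / (t - r) \<le> Sup S"
        by (rule cSup_upper[OF _ bdd]) (use t 1 in \<open>auto simp: S_def\<close>)
      then show ?thesis using 1 by (simp add: divide_le_eq algebra_simps)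
    next
      case 3
      have "Sup S \<le> (f t - f r) / (t - r)"
        by (rule cSup_least[OF \<open>S \<noteq> {}\<close>]) (use slope_le 3 in \<open>auto simp: S_def\<close>)
      then show ?thesis using 3 by (simp add: le_divide_eq algebra_simps)
    qed simp
  qed
qed

lemma mono_tendsto_SUP_at_top:
  fixes s :: "real \<Rightarrow> real"
  assumes mono: "\<And>x y. a < x \<Longrightarrow> x \<le> y \<Longrightarrow> s x \<le> s y"
  shows "((\<lambda>t. ereal (s t)) \<longlongrightarrow> (SUP t\<in>{a<..}. ereal (s t))) at_top"
proof (rule increasing_tendsto)
  show "\<forall>\<^sub>F t in at_top. ereal (s t) \<le> (SUP t\<in>{a<..}. ereal (s t))"
    using eventually_gt_at_top[of a] by eventually_elim (auto intro: SUP_upper)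
next
  fix x assume "x < (SUP t\<in>{a<..}. ereal (s t))"
  then obtain t where t: "a < t" "x < ereal (s t)" by (auto simp: less_SUP_iff)
  have "x < ereal (s u)" if "t \<le> u" for u
    using t mono[OF t(1) that] by (meson ereal_less_eq(3) less_le_trans)
  then show "\<forall>\<^sub>F u in at_top. x < ereal (s u)"
    by (auto simp: eventually_at_top_linorder)
qed

lemma mono_tendsto_INF_at_right:
  fixes s :: "real \<Rightarrow> real"
  assumes mono: "\<And>x y. a < x \<Longrightarrow> x \<le> y \<Longrightarrow> y < b \<Longrightarrow> s x \<le> s y" and "a < b"
  shows "((\<lambda>t. ereal (s t)) \<longlongrightarrow> (INF t\<in>{a<..<b}. ereal (s t))) (at_right a)"
proof (rule decreasing_tendsto)
  have "(INF t\<in>{a<..<b}. ereal (s t)) \<le> ereal (s y)" if "a < y" "y < b" for y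
    using that by (intro INF_lower) auto
  then show "\<forall>\<^sub>F t in at_right a. (INF t\<in>{a<..<b}. ereal (s t)) \<le> ereal (s t)"
    unfolding eventually_at_right[OF \<open>a < b\<close>] using \<open>a < b\<close> by blast
next
  fix x assume "(INF t\<in>{a<..<b}. ereal (s t)) < x"
  then obtain t where t: "a < t" "t < b" "ereal (s t) < x" by (auto simp: INF_less_iff)
  have "ereal (s u) < x" if "a < u" "u < t" for u
    using t mono[OF that(1) _ t(2)] that by (meson ereal_less_eq(3) le_less_trans less_imp_le)
  then show "\<forall>\<^sub>F u in at_right a. ereal (s u) < x"
    unfolding eventually_at_right[OF t(1)] using t(1) by blast
qed

lemma f_zero_tendsto:
  fixes f :: "real \<Rightarrow> real"
  assumes cf: "convex_on {0<..} f"
  shows "((\<lambda>t. ereal (f t)) \<longlongrightarrow> f_zero f) (at_right 0)" and "f_zero f \<noteq> - \<infinity>"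
proof -
  define s where "s t = (f t - f 1) / (t - 1)" for t
  define L where "L = (INF t\<in>{0<..<1}. ereal (s t))"
  have "s x \<le> s y" if "0 < x" "x \<le> y" "y < 1" for x y
    using convex_on_slope_mono[OF cf, of 1 x y] that unfolding s_def
    by (cases "x = y") auto
  then have "((\<lambda>t. ereal (s t)) \<longlongrightarrow> L) (at_right 0)"
    unfolding L_def by (intro mono_tendsto_INF_at_right) auto
  moreover have "((\<lambda>t. ereal (t - 1)) \<longlongrightarrow> ereal (-1)) (at_right 0)"
    by simp (intro tendsto_eq_intros, auto)
  ultimately have "((\<lambda>t. ereal (f 1) + ereal (s t) * ereal (t - 1)) \<longlongrightarrow> ereal (f 1) + L * ereal (-1)) (at_right 0)"
    by (intro tendsto_add_ereal_general2 tendsto_mult_ereal tendsto_const) auto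
  moreover have "\<forall>\<^sub>F t in at_right 0. ereal (f 1) + ereal (s t) * ereal (t - 1) = ereal (f t)"
    using eventually_at_right[of 0 1] by (auto elim!: eventually_mono simp: s_def)
  ultimately have lim: "((\<lambda>t. ereal (f t)) \<longlongrightarrow> ereal (f 1) + L * ereal (-1)) (at_right 0)"
    by (rule Lim_transform_eventually)
  then show "((\<lambda>t. ereal (f t)) \<longlongrightarrow> f_zero f) (at_right 0)"
    unfolding f_zero_def by (simp add: tendsto_Lim)
  have "L \<le> ereal (s (1/2))" unfolding L_def by (rule INF_lower) auto
  then have "L \<noteq> \<infinity>" by auto
  then show "f_zero f \<noteq> - \<infinity>"
    using tendsto_Lim[OF _ lim] unfolding f_zero_def by (cases L) auto
qed

lemma f_slope_tendsto:
  fixes f :: "real \<Rightarrow> real"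
  assumes cf: "convex_on {0<..} f"
  shows "((\<lambda>t. ereal (f t / t)) \<longlongrightarrow> f_slope_inf f) at_top"
proof -
  define s where "s t = (f t - f 1) / (t - 1)" for t
  define L where "L = (SUP t\<in>{1<..}. ereal (s t))"
  have "s x \<le> s y" if "1 < x" "x \<le> y" for x y
    using convex_on_slope_mono[OF cf, of 1 x y] that unfolding s_def
    by (cases "x = y") auto
  then have "((\<lambda>t. ereal (s t)) \<longlongrightarrow> L) at_top"
    unfolding L_def by (intro mono_tendsto_SUP_at_top)
  moreover have "((\<lambda>t. ereal (1 - 1 / t)) \<longlongrightarrow> ereal (1 - 0)) at_top"
    "((\<lambda>t. ereal (f 1 * (1 / t))) \<longlongrightarrow> ereal (f 1 * 0)) at_top"
    by (intro tendsto_intros tendsto_divide_0[OF tendsto_const] filterlim_at_top_imp_at_infinity[OF filterlim_ident])+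
  moreover have "L \<noteq> - \<infinity>"
    using SUP_upper[of 2 "{1<..}" "\<lambda>t. ereal (s t)"] unfolding L_def by auto
  ultimately have "((\<lambda>t. ereal (s t) * ereal (1 - 1 / t) + ereal (f 1 * (1 / t))) \<longlongrightarrow> L * ereal 1 + ereal 0) at_top"
    by (intro tendsto_add_ereal_general1 tendsto_mult_ereal) auto
  moreover have "\<forall>\<^sub>F t in at_top. ereal (s t) * ereal (1 - 1 / t) + ereal (f 1 * (1 / t)) = ereal (f t / t)"
    using eventually_gt_at_top[of 1] by eventually_elim (simp add: s_def field_simps)
  ultimately have "((\<lambda>t. ereal (f t / t)) \<longlongrightarrow> L * ereal 1 + ereal 0) at_top"
    by (rule Lim_transform_eventually)
  moreover have "L * ereal 1 + ereal 0 = L" by (cases L) auto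
  ultimately show ?thesis unfolding f_slope_inf_def by (simp add: tendsto_Lim)
qed

lemma f_zero_ge_affine:
  assumes cf: "convex_on {0<..} f" and minor: "\<And>t. 0 < t \<Longrightarrow> \<alpha> * t + \<gamma> \<le> f t"
  shows "ereal \<gamma> \<le> f_zero f"
proof (rule tendsto_le[OF trivial_limit_at_right_real f_zero_tendsto(1)[OF cf]])
  show "((\<lambda>t. ereal (\<alpha> * t + \<gamma>)) \<longlongrightarrow> ereal \<gamma>) (at_right 0)"
    by simp (intro tendsto_eq_intros, auto)
  show "\<forall>\<^sub>F t in at_right 0. ereal (\<alpha> * t + \<gamma>) \<le> ereal (f t)"
    using minor by (auto simp: eventually_at_right_less eventually_at_filter)
qed

lemma f_slope_inf_ge_affine:
  assumes cf: "convex_on {0<..} f" and minor: "\<And>t. 0 < t \<Longrightarrow> \<alpha> * t + \<gamma> \<le> f t"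
  shows "ereal \<alpha> \<le> f_slope_inf f"
proof (rule tendsto_le[OF trivial_limit_at_top_linorder f_slope_tendsto[OF cf]])
  have "((\<lambda>t. \<alpha> + \<gamma> / t) \<longlongrightarrow> \<alpha> + 0) at_top"
    by (intro tendsto_add tendsto_const tendsto_divide_0[OF tendsto_const]
        filterlim_at_top_imp_at_infinity[OF filterlim_ident])
  then show "((\<lambda>t. ereal (\<alpha> + \<gamma> / t)) \<longlongrightarrow> ereal \<alpha>) at_top"
    by simp
  have "\<alpha> + \<gamma> / t \<le> f t / t" if "0 < t" for t
  proof -
    have "\<alpha> + \<gamma> / t = (\<alpha> * t + \<gamma>) / t" using that by (simp add: field_simps)
    also have "\<dots> \<le> f t / t" using minor[OF that] that by (intro divide_right_mono) auto
    finally show ?thesis .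
  qed
  then show "\<forall>\<^sub>F t in at_top. ereal (\<alpha> + \<gamma> / t) \<le> ereal (f t / t)"
    by (intro eventually_mono[OF eventually_gt_at_top[of 0]]) auto
qed

lemma f_persp_ge_affine:
  assumes cf: "convex_on {0<..} f" and minor: "\<And>t. 0 < t \<Longrightarrow> \<alpha> * t + \<gamma> \<le> f t"
    and "0 \<le> x" "0 \<le> y"
  shows "ereal (\<alpha> * x + \<gamma> * y) \<le> f_persp f x y"
proof -
  consider "0 < x" "0 < y" | "x = 0" "0 < y" | "0 < x" "y = 0" | "x = 0" "y = 0"
    using assms(3,4) by linarith
  then show ?thesis
  proof cases
    case 1
    have "y * (\<alpha> * (x / y) + \<gamma>) \<le> y * f (x / y)"
      using minor[of "x / y"] 1 by (intro mult_left_mono) auto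
    moreover have "y * (\<alpha> * (x / y) + \<gamma>) = \<alpha> * x + \<gamma> * y"
      using 1 by (simp add: field_simps)
    ultimately have "\<alpha> * x + \<gamma> * y \<le> y * f (x / y)" by linarith
    then show ?thesis using 1 by (simp add: f_persp_def)
  next
    case 2
    have "ereal y * ereal \<gamma> \<le> ereal y * f_zero f"
      using f_zero_ge_affine[OF cf minor] 2 by (intro ereal_mult_left_mono) auto
    then show ?thesis using 2 by (simp add: f_persp_def mult.commute)
  next
    case 3
    have "ereal x * ereal \<alpha> \<le> ereal x * f_slope_inf f"
      using f_slope_inf_ge_affine[OF cf minor] 3 by (intro ereal_mult_left_mono) auto
    then show ?thesis using 3 by (simp add: f_persp_def mult.commute)
  qed (simp add: f_persp_def)
qed

lemma f_persp_le_affine: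
  assumes major: "\<And>t. 0 < t \<Longrightarrow> r1 \<le> t \<Longrightarrow> t \<le> r2 \<Longrightarrow> f t \<le> \<alpha> * t + \<gamma>"
    and zero: "r1 = 0 \<Longrightarrow> f_zero f \<le> ereal \<gamma>"
    and "0 \<le> r1" "0 \<le> x" "0 \<le> y" "r1 * y \<le> x" "x \<le> r2 * y"
  shows "f_persp f x y \<le> ereal (\<alpha> * x + \<gamma> * y)"
proof -
  consider "0 < x" "0 < y" | "x = 0" "0 < y" | "y = 0"
    using assms(4,5) by linarith
  then show ?thesis
  proof cases
    case 1
    have "y * f (x / y) \<le> y * (\<alpha> * (x / y) + \<gamma>)"
      using major[of "x / y"] assms 1 by (intro mult_left_mono) (auto simp: field_simps)
    moreover have "y * (\<alpha> * (x / y) + \<gamma>) = \<alpha> * x + \<gamma> * y"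
      using 1 by (simp add: field_simps)
    ultimately have "y * f (x / y) \<le> \<alpha> * x + \<gamma> * y" by linarith
    then show ?thesis using 1 by (simp add: f_persp_def)
  next
    case 2
    then have "r1 = 0" using assms(3,6) by (simp add: mult_le_0_iff)
    then have "ereal y * f_zero f \<le> ereal y * ereal \<gamma>"
      using zero 2 by (intro ereal_mult_left_mono) auto
    then show ?thesis using 2 by (simp add: f_persp_def mult.commute)
  next
    case 3
    then show ?thesis using assms(4,7) by (simp add: f_persp_def)
  qed
qed

lemma convex_on_le_chord:
  fixes f :: "real \<Rightarrow> real"
  assumes cf: "convex_on {0<..} f" and "0 < r1" "r1 < r2" "r1 \<le> t" "t \<le> r2"
  shows "f t \<le> ((r2 - t) * f r1 + (t - r1) * f r2) / (r2 - r1)"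
proof -
  define a where "a = (t - r1) / (r2 - r1)"
  have "0 \<le> a" "a \<le> 1" using assms by (auto simp: a_def field_simps)
  have "a * (r2 - r1) = t - r1" using assms by (simp add: a_def)
  then have "(1 - a) *\<^sub>R r1 + a *\<^sub>R r2 = t" by (simp add: algebra_simps)
  with \<open>0 \<le> a\<close> \<open>a \<le> 1\<close> have "f t \<le> (1 - a) * f r1 + a * f r2"
    using convex_onD[OF cf, of a r1 r2] assms by auto
  also have "\<dots> = ((r2 - t) * f r1 + (t - r1) * f r2) / (r2 - r1)"
  proof -
    have "1 - a = (r2 - t) / (r2 - r1)" using assms by (simp add: a_def field_simps)
    then show ?thesis unfolding a_def by (simp add: add_divide_distrib)
  qed
  finally show ?thesis .
qed

text \<open>For \<open>r1 = 0\<close> the chord starts at the boundary value \<open>f_zero f\<close>, approached by the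
  chords starting at \<open>d \<rightarrow> 0\<close>.\<close>
lemma convex_on_le_chord_f_ext:
  fixes f :: "real \<Rightarrow> real"
  assumes cf: "convex_on {0<..} f" and r: "0 \<le> r1" "r1 < r2" and F1: "f_ext f r1 = ereal F1"
    and t: "0 < t" "r1 \<le> t" "t \<le> r2"
  shows "f t \<le> ((r2 - t) * F1 + (t - r1) * f r2) / (r2 - r1)"
proof (cases "r1 = 0")
  case False
  then show ?thesis using convex_on_le_chord[OF cf _ r(2) t(2,3)] r F1 by (simp add: f_ext_def)
next
  case r1: True
  show ?thesis
  proof (cases "t = r2")
    case False
    have "(f \<longlongrightarrow> F1) (at_right 0)"
      using f_zero_tendsto(1)[OF cf] F1 r1 by (simp add: f_ext_def)
    then have "((\<lambda>d. ((r2 - t) * f d + (t - d) * f r2) / (r2 - d))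
        \<longlongrightarrow> ((r2 - t) * F1 + (t - 0) * f r2) / (r2 - 0)) (at_right 0)"
      using r by (intro tendsto_intros) auto
    moreover have "\<forall>\<^sub>F d in at_right 0. f t \<le> ((r2 - t) * f d + (t - d) * f r2) / (r2 - d)"
      unfolding eventually_at_right[OF t(1)]
      using convex_on_le_chord[OF cf, of _ r2 t] t False by (intro exI[of _ t]) auto
    ultimately show ?thesis
      using r1 by (intro tendsto_le[OF trivial_limit_at_right_real _ tendsto_const]) auto
  qed (use r in auto)
qed

lemma supporting_line_intercept_antimono:
  fixes f :: "real \<Rightarrow> real"
  assumes st: "0 < s" "s < t"
    and gs: "\<And>x. 0 < x \<Longrightarrow> f s + gs * (x - s) \<le> f x"
    and gt: "\<And>x. 0 < x \<Longrightarrow> f t + gt * (x - t) \<le> f x"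
  shows "f t - gt * t \<le> f s - gs * s"
proof -
  have a: "f t + gt * (s - t) \<le> f s" using gt[of s] st by simp
  have "f s + gs * (t - s) \<le> f t" using gs[of t] st by simp
  with a have "(gs - gt) * (t - s) \<le> 0" by (simp add: algebra_simps)
  then have "0 \<le> (gt - gs) * s" using st by (simp add: mult_le_0_iff)
  with a show ?thesis by (simp add: algebra_simps)
qed

lemma f_zero_approx_by_intercept:
  fixes f :: "real \<Rightarrow> real"
  assumes cf: "convex_on {0<..} f" and y: "ereal y < f_zero f" and b: "0 < b"
  obtains d g where "0 < d" "d < b" "\<And>t. 0 < t \<Longrightarrow> f d + g * (t - d) \<le> f t" "y < f d - g * d"
proof -
  obtain y' where "ereal y < ereal y'" and y'2: "ereal y' < f_zero f"
    using ereal_dense2[OF y] by blast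
  then have y'1: "y < y'" by simp
  have "((\<lambda>d. (b * y' - d * f b) / (b - d)) \<longlongrightarrow> (b * y' - 0 * f b) / (b - 0)) (at_right 0)"
    using b by (intro tendsto_intros) auto
  then have e1: "\<forall>\<^sub>F d in at_right 0. y < (b * y' - d * f b) / (b - d)"
    using y'1 b by (intro order_tendstoD(1)) auto
  have e2: "\<forall>\<^sub>F d in at_right 0. ereal y' < ereal (f d)"
    using order_tendstoD(1)[OF f_zero_tendsto(1)[OF cf] y'2] .
  have e3: "\<forall>\<^sub>F d in at_right 0. 0 < d \<and> d < b"
    using b by (subst eventually_at_right[of 0 b]) auto
  have "\<forall>\<^sub>F d in at_right 0. y < (b * y' - d * f b) / (b - d) \<and> ereal y' < ereal (f d) \<and> 0 < d \<and> d < b"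
    using eventually_conj[OF e1 eventually_conj[OF e2 e3]] by simp
  then obtain d where d: "y < (b * y' - d * f b) / (b - d)" "y' < f d" "0 < d" "d < b"
    using eventually_happens'[OF trivial_limit_at_right_real] by auto
  obtain g where g: "\<And>t. 0 < t \<Longrightarrow> f d + g * (t - d) \<le> f t"
    using convex_on_supporting_line[OF cf d(3)] by blast
  have "g * (b - d) \<le> f b - f d" using g[of b] b by simp
  then have "g * d \<le> d * (f b - f d) / (b - d)"
    using d by (simp add: le_divide_eq mult.commute mult_left_mono)
  moreover have "(b * y' - d * f b) / (b - d) < (b * f d - d * f b) / (b - d)"
    using d by (intro divide_strict_right_mono) auto
  moreover have "(b * f d - d * f b) / (b - d) = f d - d * (f b - f d) / (b - d)"
    using d by (simp add: field_simps)
  ultimately have "y < f d - g * d" using d(1) by linarith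
  with d g show ?thesis using that by blast
qed

lemma ereal_add_mult_le_of_less:
  fixes Z S :: ereal and c w :: real
  assumes w: "0 < w" and Z: "Z \<noteq> - \<infinity>" and H: "\<And>y. ereal y < Z \<Longrightarrow> ereal (c + w * y) \<le> S"
  shows "ereal c + ereal w * Z \<le> S"
proof (cases Z)
  case (real z)
  have "x \<le> S" if x: "x < ereal (c + w * z)" for x
  proof (cases x)
    case (real v)
    then have "(v - c) / w < z" using x w by (simp add: field_simps)
    then have "ereal (c + w * ((v - c) / w)) \<le> S" using \<open>Z = ereal z\<close> by (intro H) simp
    moreover have "c + w * ((v - c) / w) = v" using w by simp
    ultimately show ?thesis using real by metis
  qed (use x in auto)
  then have "ereal (c + w * z) \<le> S" by (rule dense_le)
  then show ?thesis using real by simp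
next
  case PInf
  have "S = \<infinity>"
  proof (cases S)
    case (real s)
    have "ereal (c + w * ((s - c) / w + 1)) \<le> S" using H PInf by simp
    then show ?thesis using real w by (simp add: field_simps mult_le_0_iff)
  qed (use H[of 0] PInf in auto)
  then show ?thesis by simp
qed (use Z in simp)

lemma chord_value_le_of_affine_minorants:
  fixes f :: "real \<Rightarrow> real" and S :: ereal
  assumes cf: "convex_on {0<..} f" and r: "0 \<le> r1" "r1 \<le> r2" "0 < r2" and a: "0 \<le> a" "a < 1"
    and H: "\<And>\<alpha>1 \<gamma>1 \<alpha>2 \<gamma>2. (\<And>t. 0 < t \<Longrightarrow> \<alpha>1 * t + \<gamma>1 \<le> f t) \<Longrightarrow>
              (\<And>t. 0 < t \<Longrightarrow> \<alpha>2 * t + \<gamma>2 \<le> f t) \<Longrightarrow> \<gamma>2 \<le> \<gamma>1 \<Longrightarrow>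
              ereal (a * (\<alpha>2 * r2 + \<gamma>2) + (1 - a) * (\<alpha>1 * r1 + \<gamma>1)) \<le> S"
  shows "ereal (a * f r2) + ereal (1 - a) * f_ext f r1 \<le> S"
proof -
  have line: "g * t + (f r - g * r) \<le> f t" if "f r + g * (t - r) \<le> f t" for g r t
    using that by (simp add: algebra_simps)
  obtain g2 where g2: "\<And>t. 0 < t \<Longrightarrow> f r2 + g2 * (t - r2) \<le> f t"
    using convex_on_supporting_line[OF cf r(3)] by blast
  show ?thesis
  proof (cases "r1 = 0")
    case False
    then have "0 < r1" using r by simp
    obtain g1 where g1: "\<And>t. 0 < t \<Longrightarrow> f r1 + g1 * (t - r1) \<le> f t"
      and g12: "f r2 - g2 * r2 \<le> f r1 - g1 * r1"
    proof (cases "r1 = r2")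
      case True
      then show ?thesis using that[of g2] g2 by simp
    next
      case False
      obtain g1 where g1: "\<And>t. 0 < t \<Longrightarrow> f r1 + g1 * (t - r1) \<le> f t"
        using convex_on_supporting_line[OF cf \<open>0 < r1\<close>] by blast
      moreover have "r1 < r2" using False r by simp
      ultimately show ?thesis
        using that supporting_line_intercept_antimono[OF \<open>0 < r1\<close> _ g1 g2] by blast
    qed
    have "ereal (a * (g2 * r2 + (f r2 - g2 * r2)) + (1 - a) * (g1 * r1 + (f r1 - g1 * r1))) \<le> S"
      by (intro H line) (use g1 g2 g12 in auto)
    then show ?thesis using \<open>0 < r1\<close> by (simp add: f_ext_def)
  next
    case r1: True
    have "ereal (a * f r2) + ereal (1 - a) * f_zero f \<le> S"
    proof (rule ereal_add_mult_le_of_less)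
      show "0 < 1 - a" using a by simp
      show "f_zero f \<noteq> - \<infinity>" by (rule f_zero_tendsto(2)[OF cf])
      fix y assume "ereal y < f_zero f"
      then obtain d g where d: "0 < d" "d < r2" and g: "\<And>t. 0 < t \<Longrightarrow> f d + g * (t - d) \<le> f t"
        and y: "y < f d - g * d"
        using f_zero_approx_by_intercept[OF cf _ r(3)] by blast
      have "f r2 - g2 * r2 \<le> f d - g * d"
        by (rule supporting_line_intercept_antimono[OF d g g2])
      then have "ereal (a * (g2 * r2 + (f r2 - g2 * r2)) + (1 - a) * (g * r1 + (f d - g * d))) \<le> S"
        by (intro H line) (use g g2 in auto)
      moreover have "a * f r2 + (1 - a) * y \<le> a * (g2 * r2 + (f r2 - g2 * r2)) + (1 - a) * (g * r1 + (f d - g * d))"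
        using r1 y a by (simp add: mult_left_mono)
      ultimately show "ereal (a * f r2 + (1 - a) * y) \<le> S"
        by (meson ereal_less_eq(3) order_trans)
    qed
    then show ?thesis using r1 by (simp add: f_ext_def)
  qed
qed

text \<open>If \<open>r1 = r2\<close>, hence both are \<open>1\<close>, the weights on the left are \<open>0 / 0 = 0\<close> and both sides vanish.\<close>
lemma chord_weights:
  fixes f :: "real \<Rightarrow> real"
  assumes "a < 1" "a * r2 + (1 - a) * r1 = 1" "r1 \<le> r2" "f 1 = 0"
  shows "ereal ((1 - r1) / (r2 - r1) * f r2) + ereal ((r2 - 1) / (r2 - r1)) * f_ext f r1
       = ereal (a * f r2) + ereal (1 - a) * f_ext f r1"
proof (cases "r1 = r2")
  case True
  then have "r1 = 1" "r2 = 1" using assms(2) by (auto simp: algebra_simps)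
  then show ?thesis using assms(4) by (simp add: f_ext_def)
next
  case False
  then have "(1 - r1) / (r2 - r1) = a" "(r2 - 1) / (r2 - r1) = 1 - a"
    using assms(2,3) by (auto simp: field_simps)
  then show ?thesis by simp
qed

section \<open>Ratio-bounded pairs of probability measures\<close>

locale prob_pair =
  fixes P Q :: "'a measure"
  assumes prob_P: "prob_space P" and prob_Q: "prob_space Q" and sets_Q: "sets Q = sets P"
begin

abbreviation "\<mu> \<equiv> sum_meas P Q"

definition "dP x = enn2real (RN_deriv \<mu> P x)"
definition "dQ x = enn2real (RN_deriv \<mu> Q x)"

lemma finite_P: "finite_measure P" and finite_Q: "finite_measure Q"
  using prob_P prob_Q by (auto simp: prob_space_def)

lemma space_Q: "space Q = space P"
  using sets_Q by (rule sets_eq_imp_space_eq)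

lemma sets_mu [simp]: "sets \<mu> = sets P" and space_mu [simp]: "space \<mu> = space P"
  using sets_sum_meas[OF finite_P finite_Q sets_Q] space_sum_meas[OF finite_P finite_Q sets_Q] .

lemma emeasure_mu: "A \<in> sets P \<Longrightarrow> emeasure \<mu> A = emeasure P A + emeasure Q A"
  using emeasure_sum_meas[OF finite_P finite_Q sets_Q] .

sublocale mu: finite_measure \<mu>
proof
  show "emeasure \<mu> (space \<mu>) \<noteq> \<infinity>"
    using emeasure_mu[of "space P"] space_Q finite_measure.emeasure_finite[OF finite_P, of "space P"]
      finite_measure.emeasure_finite[OF finite_Q, of "space Q"]
    by simp
qed

lemma
  assumes B: "B \<in> sets P"
  shows integrable_dens: "integrable \<mu> (\<lambda>x. (c * dP x + d * dQ x) * indicator B x)"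
    and integral_dens: "(\<integral>x. (c * dP x + d * dQ x) * indicator B x \<partial>\<mu>) = c * measure P B + d * measure Q B"
proof -
  have ac: "absolutely_continuous \<mu> P" "absolutely_continuous \<mu> Q"
    unfolding absolutely_continuous_def by (auto simp: null_sets_def emeasure_mu sets_Q)
  note RN_P = RN_deriv_indicator[OF mu.finite_measure_axioms finite_P ac(1) _ B[folded sets_mu], folded dP_def]
  note RN_Q = RN_deriv_indicator[OF mu.finite_measure_axioms finite_Q ac(2) _ B[folded sets_mu], folded dQ_def]
  have eq: "(c * dP x + d * dQ x) * indicator B x = c * (dP x * indicator B x) + d * (dQ x * indicator B x)" for x
    by (simp add: algebra_simps)
  show "integrable \<mu> (\<lambda>x. (c * dP x + d * dQ x) * indicator B x)"
    unfolding eq using RN_P RN_Q sets_Q by simp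
  show "(\<integral>x. (c * dP x + d * dQ x) * indicator B x \<partial>\<mu>) = c * measure P B + d * measure Q B"
    unfolding eq using RN_P RN_Q sets_Q by simp
qed

lemma fdiv_eq_ext_integral: "fdiv f P Q = ext_integral \<mu> (\<lambda>x. f_persp f (dP x) (dQ x))"
  unfolding fdiv_def Let_def ext_integral_def dP_def dQ_def ..

lemma fdiv_ge_split_affine:
  assumes cf: "convex_on {0<..} f"
    and minor1: "\<And>t. 0 < t \<Longrightarrow> \<alpha>1 * t + \<gamma>1 \<le> f t"
    and minor2: "\<And>t. 0 < t \<Longrightarrow> \<alpha>2 * t + \<gamma>2 \<le> f t"
    and A: "A \<in> sets P"
  shows "ereal (\<alpha>2 * measure P A + \<gamma>2 * measure Q A
      + \<alpha>1 * measure P (space P - A) + \<gamma>1 * measure Q (space P - A)) \<le> fdiv f P Q"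
proof -
  have Ac: "space P - A \<in> sets P" using A by auto
  define \<phi> where "\<phi> x = (\<alpha>2 * dP x + \<gamma>2 * dQ x) * indicator A x
      + (\<alpha>1 * dP x + \<gamma>1 * dQ x) * indicator (space P - A) x" for x
  have int: "integrable \<mu> \<phi>"
    unfolding \<phi>_def using integrable_dens[OF A] integrable_dens[OF Ac] by simp
  have "integral\<^sup>L \<mu> \<phi> = \<alpha>2 * measure P A + \<gamma>2 * measure Q A
      + (\<alpha>1 * measure P (space P - A) + \<gamma>1 * measure Q (space P - A))"
    unfolding \<phi>_def using integrable_dens[OF A] integrable_dens[OF Ac]
    by (simp add: integral_dens[OF A] integral_dens[OF Ac])
  moreover have "AE x in \<mu>. ereal (\<phi> x) \<le> f_persp f (dP x) (dQ x)"
  proof (rule AE_I2)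
    fix x assume "x \<in> space \<mu>"
    then show "ereal (\<phi> x) \<le> f_persp f (dP x) (dQ x)"
      using f_persp_ge_affine[OF cf minor1] f_persp_ge_affine[OF cf minor2]
      by (cases "x \<in> A") (auto simp: \<phi>_def dP_def dQ_def)
  qed
  ultimately show ?thesis
    using ext_integral_mono_AE ext_integral_ereal[OF int] fdiv_eq_ext_integral
    by (metis add.assoc)
qed

lemma AE_nonpos_of_set_integrals_nonpos:
  fixes g :: "'a \<Rightarrow> real"
  assumes g: "integrable \<mu> g" and le: "\<And>B. B \<in> sets P \<Longrightarrow> (\<integral>x. g x * indicator B x \<partial>\<mu>) \<le> 0"
  shows "AE x in \<mu>. g x \<le> 0"
proof -
  define B where "B = {x \<in> space \<mu>. 0 < g x}"
  have [measurable]: "g \<in> borel_measurable \<mu>" using g by auto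
  have "B \<in> sets \<mu>" unfolding B_def by measurable
  then have B: "B \<in> sets P" by simp
  have nn: "AE x in \<mu>. 0 \<le> g x * indicator B x" by (auto simp: B_def indicator_def)
  have "(\<integral>x. g x * indicator B x \<partial>\<mu>) = 0"
    using integral_nonneg_AE[OF nn] le[OF B] by simp
  then have "AE x in \<mu>. g x * indicator B x = 0"
    using integral_nonneg_eq_0_iff_AE[OF _ nn] g B by (simp add: integrable_real_mult_indicator)
  then show ?thesis
    using AE_space by eventually_elim (auto simp: B_def indicator_def split: if_splits)
qed

lemma fdiv_le_affine_majorant:
  assumes upper: "\<And>B. B \<in> sets P \<Longrightarrow> measure P B \<le> r2 * measure Q B"
    and lower: "\<And>B. B \<in> sets P \<Longrightarrow> r1 * measure Q B \<le> measure P B"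
    and major: "\<And>t. 0 < t \<Longrightarrow> r1 \<le> t \<Longrightarrow> t \<le> r2 \<Longrightarrow> f t \<le> \<alpha> * t + \<gamma>"
    and zero: "r1 = 0 \<Longrightarrow> f_zero f \<le> ereal \<gamma>" and r1: "0 \<le> r1"
  shows "fdiv f P Q \<le> ereal (\<alpha> + \<gamma>)"
proof -
  have int: "integrable \<mu> (\<lambda>x. c * dP x + d * dQ x)" for c d
    using integrable_dens[of "space P" c d] Bochner_Integration.integrable_cong[OF refl,
        of \<mu> "\<lambda>x. (c * dP x + d * dQ x) * indicator (space P) x" "\<lambda>x. c * dP x + d * dQ x"]
    by simp
  have AE_le: "AE x in \<mu>. c * dP x + d * dQ x \<le> 0"
    if "\<And>B. B \<in> sets P \<Longrightarrow> c * measure P B + d * measure Q B \<le> 0" for c d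
    using that by (intro AE_nonpos_of_set_integrals_nonpos int) (simp add: integral_dens)
  have "AE x in \<mu>. dP x - r2 * dQ x \<le> 0"
    using AE_le[of 1 "- r2"] upper by simp
  moreover have "AE x in \<mu>. r1 * dQ x - dP x \<le> 0"
    using AE_le[of "- 1" r1] lower by simp
  ultimately have "AE x in \<mu>. f_persp f (dP x) (dQ x) \<le> ereal (\<alpha> * dP x + \<gamma> * dQ x)"
    by eventually_elim (rule f_persp_le_affine[OF major zero r1], auto simp: dP_def dQ_def)
  then have "fdiv f P Q \<le> ereal (integral\<^sup>L \<mu> (\<lambda>x. \<alpha> * dP x + \<gamma> * dQ x))"
    unfolding fdiv_eq_ext_integral ext_integral_ereal[OF int, symmetric] by (rule ext_integral_mono_AE)
  also have "integral\<^sup>L \<mu> (\<lambda>x. \<alpha> * dP x + \<gamma> * dQ x) = \<alpha> + \<gamma>"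
    using integral_dens[of "space P" \<alpha> \<gamma>] prob_space.prob_space[OF prob_P] prob_space.prob_space[OF prob_Q]
      Bochner_Integration.integral_cong[OF refl,
        of \<mu> "\<lambda>x. (\<alpha> * dP x + \<gamma> * dQ x) * indicator (space P) x" "\<lambda>x. \<alpha> * dP x + \<gamma> * dQ x"]
    by (simp add: space_Q)
  finally show ?thesis .
qed

lemma fdiv_le_chord_value:
  assumes upper: "\<And>B. B \<in> sets P \<Longrightarrow> measure P B \<le> r2 * measure Q B"
    and lower: "\<And>B. B \<in> sets P \<Longrightarrow> r1 * measure Q B \<le> measure P B"
    and r: "0 \<le> r1" "r1 \<le> r2" and a: "a < 1" "a * r2 + (1 - a) * r1 = 1"
    and cf: "convex_on {0<..} f" and f1: "f 1 = 0"
  shows "fdiv f P Q \<le> ereal (a * f r2) + ereal (1 - a) * f_ext f r1"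
proof (cases "r1 = r2")
  case True
  then have "r1 = 1" "r2 = 1" using a(2) by (auto simp: algebra_simps)
  then have "fdiv f P Q \<le> ereal (0 + 0)"
    by (intro fdiv_le_affine_majorant[OF upper lower]) (use f1 in auto)
  then show ?thesis using \<open>r1 = 1\<close> \<open>r2 = 1\<close> f1 by (simp add: f_ext_def)
next
  case False
  then have r12: "r1 < r2" using r by simp
  show ?thesis
  proof (cases "f_ext f r1")
    case (real F1)
    define \<alpha> where "\<alpha> = (f r2 - F1) / (r2 - r1)"
    define \<gamma> where "\<gamma> = (r2 * F1 - r1 * f r2) / (r2 - r1)"
    have chord: "\<alpha> * t + \<gamma> = ((r2 - t) * F1 + (t - r1) * f r2) / (r2 - r1)" for t
    proof -
      have "\<alpha> * t + \<gamma> = ((f r2 - F1) * t + (r2 * F1 - r1 * f r2)) / (r2 - r1)"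
        by (simp add: \<alpha>_def \<gamma>_def add_divide_distrib)
      also have "(f r2 - F1) * t + (r2 * F1 - r1 * f r2) = (r2 - t) * F1 + (t - r1) * f r2"
        by (simp add: algebra_simps)
      finally show ?thesis .
    qed
    have "fdiv f P Q \<le> ereal (\<alpha> + \<gamma>)"
    proof (rule fdiv_le_affine_majorant[OF upper lower _ _ r(1)])
      show "f t \<le> \<alpha> * t + \<gamma>" if "0 < t" "r1 \<le> t" "t \<le> r2" for t
        unfolding chord using convex_on_le_chord_f_ext[OF cf r(1) r12 real that] .
      show "f_zero f \<le> ereal \<gamma>" if "r1 = 0"
        using real that r12 by (simp add: f_ext_def \<gamma>_def)
    qed
    moreover have "a = (1 - r1) / (r2 - r1)" "1 - a = (r2 - 1) / (r2 - r1)"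
      using a(2) r12 by (simp_all add: field_simps)
    then have "\<alpha> + \<gamma> = a * f r2 + (1 - a) * F1"
      using chord[of 1] by (simp add: add_divide_distrib)
    ultimately show ?thesis using real by simp
  next
    case PInf
    then show ?thesis using a(1) by simp
  next
    case MInf
    then show ?thesis using f_zero_tendsto(2)[OF cf] by (simp add: f_ext_def split: if_splits)
  qed
qed

end

section \<open>Trade-off functions and local differential privacy\<close>

lemma integral_density_le_mult:
  fixes q1 q2 :: "'a \<Rightarrow> real"
  assumes q1: "q1 \<in> borel_measurable M" "\<And>x. 0 \<le> q1 x"
    and q2: "q2 \<in> borel_measurable M" "\<And>x. 0 \<le> q2 x"
    and fin: "finite_measure (density M (\<lambda>x. ennreal (q1 x)))"
    and E: "0 \<le> E" and ratio: "\<And>x. q2 x \<le> E * q1 x"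
    and \<phi>: "\<phi> \<in> borel_measurable M" "\<And>x. 0 \<le> \<phi> x" "\<And>x. \<phi> x \<le> 1"
  shows "(\<integral>x. \<phi> x \<partial>density M q2) \<le> E * (\<integral>x. \<phi> x \<partial>density M q1)"
proof -
  let ?M1 = "density M (\<lambda>x. ennreal (q1 x))" and ?M2 = "density M (\<lambda>x. ennreal (q2 x))"
  interpret M1: finite_measure ?M1 by (rule fin)
  have "(\<integral>\<^sup>+ x. ennreal (\<phi> x) \<partial>?M2) = (\<integral>\<^sup>+ x. ennreal (q2 x * \<phi> x) \<partial>M)"
    using q2 \<phi> by (subst nn_integral_density) (auto simp: ennreal_mult)
  also have "\<dots> \<le> (\<integral>\<^sup>+ x. ennreal E * ennreal (q1 x * \<phi> x) \<partial>M)"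
  proof (intro nn_integral_mono)
    fix x
    have "ennreal (q2 x * \<phi> x) \<le> ennreal (E * (q1 x * \<phi> x))"
      using mult_right_mono[OF ratio \<phi>(2)] by (intro ennreal_leI) (simp add: mult.assoc)
    also have "\<dots> = ennreal E * ennreal (q1 x * \<phi> x)"
      using E q1(2)[of x] \<phi>(2)[of x] by (simp add: ennreal_mult)
    finally show "ennreal (q2 x * \<phi> x) \<le> ennreal E * ennreal (q1 x * \<phi> x)" .
  qed
  also have "\<dots> = ennreal E * (\<integral>\<^sup>+ x. ennreal (\<phi> x) \<partial>?M1)"
    using q1 \<phi> by (subst nn_integral_density) (auto simp: nn_integral_cmult ennreal_mult)
  finally have le: "(\<integral>\<^sup>+ x. ennreal (\<phi> x) \<partial>?M2) \<le> ennreal E * (\<integral>\<^sup>+ x. ennreal (\<phi> x) \<partial>?M1)" .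
  have "(\<integral>\<^sup>+ x. ennreal (\<phi> x) \<partial>?M1) \<le> (\<integral>\<^sup>+ x. 1 \<partial>?M1)"
    using \<phi> by (intro nn_integral_mono) auto
  moreover have "(\<integral>\<^sup>+ x. 1 \<partial>?M1) < \<infinity>"
    by (simp add: less_top[symmetric])
  ultimately have fin1: "(\<integral>\<^sup>+ x. ennreal (\<phi> x) \<partial>?M1) < \<infinity>"
    by (rule order.strict_trans1)
  have "(\<integral>x. \<phi> x \<partial>?M2) = enn2real (\<integral>\<^sup>+ x. ennreal (\<phi> x) \<partial>?M2)"
    using \<phi> by (intro integral_eq_nn_integral) auto
  also have "\<dots> \<le> enn2real (ennreal E * (\<integral>\<^sup>+ x. ennreal (\<phi> x) \<partial>?M1))"
    using le fin1 by (intro enn2real_mono) (auto simp: ennreal_mult_less_top)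
  also have "\<dots> = E * (\<integral>x. \<phi> x \<partial>?M1)"
    using E \<phi> by (simp add: enn2real_mult integral_eq_nn_integral)
  finally show ?thesis .
qed

lemma measure_density_le_mult:
  fixes q1 q2 :: "'a \<Rightarrow> real"
  assumes "q1 \<in> borel_measurable M" "\<And>x. 0 \<le> q1 x" "q2 \<in> borel_measurable M" "\<And>x. 0 \<le> q2 x"
    and "finite_measure (density M (\<lambda>x. ennreal (q1 x)))"
    and "0 \<le> E" "\<And>x. q2 x \<le> E * q1 x" and B: "B \<in> sets M"
  shows "measure (density M q2) B \<le> E * measure (density M q1) B"
  using integral_density_le_mult[OF assms(1-7), of "indicator B"] B
  by (simp add: Int_absorb2 sets.sets_into_space)

lemma g_eps_le_tradeoff_density:
  fixes q1 q2 :: "'a \<Rightarrow> real"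
  assumes q1: "q1 \<in> borel_measurable M" "\<And>x. 0 \<le> q1 x"
    and q2: "q2 \<in> borel_measurable M" "\<And>x. 0 \<le> q2 x"
    and P1: "prob_space (density M (\<lambda>x. ennreal (q1 x)))"
    and P2: "prob_space (density M (\<lambda>x. ennreal (q2 x)))"
    and eps: "0 \<le> \<epsilon>" and r12: "\<And>x. q2 x \<le> exp \<epsilon> * q1 x" and r21: "\<And>x. q1 x \<le> exp \<epsilon> * q2 x"
    and u: "0 \<le> u"
  shows "g_eps \<epsilon> u \<le> tradeoff (density M q1) (density M q2) u"
  unfolding tradeoff_def
proof (rule cInf_greatest)
  let ?M1 = "density M (\<lambda>x. ennreal (q1 x))" and ?M2 = "density M (\<lambda>x. ennreal (q2 x))"
  interpret M1: prob_space ?M1 by fact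
  interpret M2: prob_space ?M2 by fact
  show "{1 - integral\<^sup>L ?M2 \<phi> |\<phi>. \<phi> \<in> borel_measurable ?M1 \<and> (\<forall>x. 0 \<le> \<phi> x \<and> \<phi> x \<le> 1) \<and> integral\<^sup>L ?M1 \<phi> \<le> u} \<noteq> {}"
    using u by (intro ex_in_conv[THEN iffD1] exI CollectI exI[of _ "\<lambda>_. 0"]) auto
  fix y
  assume "y \<in> {1 - integral\<^sup>L ?M2 \<phi> |\<phi>. \<phi> \<in> borel_measurable ?M1 \<and> (\<forall>x. 0 \<le> \<phi> x \<and> \<phi> x \<le> 1) \<and> integral\<^sup>L ?M1 \<phi> \<le> u}"
  then obtain \<phi> where y: "y = 1 - integral\<^sup>L ?M2 \<phi>" and "\<phi> \<in> borel_measurable ?M1"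
    and \<phi>: "\<And>x. 0 \<le> \<phi> x" "\<And>x. \<phi> x \<le> 1" and type1: "integral\<^sup>L ?M1 \<phi> \<le> u" by blast
  then have \<phi>m: "\<phi> \<in> borel_measurable M" by simp
  have fin: "finite_measure ?M1" "finite_measure ?M2"
    by (fact M1.finite_measure_axioms M2.finite_measure_axioms)+
  have int: "integrable ?M1 \<phi>" "integrable ?M2 \<phi>"
    using \<phi>m \<phi> by (auto intro!: M1.integrable_const_bound[of _ 1] M2.integrable_const_bound[of _ 1])
  then have "integral\<^sup>L ?M1 (\<lambda>x. 1 - \<phi> x) = 1 - integral\<^sup>L ?M1 \<phi>"
    "integral\<^sup>L ?M2 (\<lambda>x. 1 - \<phi> x) = 1 - integral\<^sup>L ?M2 \<phi>"
    by (simp_all add: M1.prob_space[simplified] M2.prob_space[simplified])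
  moreover have "integral\<^sup>L ?M1 (\<lambda>x. 1 - \<phi> x) \<le> exp \<epsilon> * integral\<^sup>L ?M2 (\<lambda>x. 1 - \<phi> x)"
    using \<phi>m \<phi> by (intro integral_density_le_mult[OF q2 q1 fin(2) _ r21]) auto
  ultimately have "1 - u \<le> exp \<epsilon> * y" using type1 y by simp
  then have "exp (- \<epsilon>) * (1 - u) \<le> y" by (simp add: exp_minus field_simps)
  moreover have "integral\<^sup>L ?M2 \<phi> \<le> exp \<epsilon> * integral\<^sup>L ?M1 \<phi>"
    using \<phi>m \<phi> by (intro integral_density_le_mult[OF q1 q2 fin(1) _ r12]) auto
  then have "1 - exp \<epsilon> * u \<le> y"
    using type1 y eps by (smt (verit) mult_left_mono one_le_exp_iff)
  moreover have "integral\<^sup>L ?M2 \<phi> \<le> integral\<^sup>L ?M2 (\<lambda>_. 1)"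
    using int \<phi> by (intro integral_mono) auto
  then have "integral\<^sup>L ?M2 \<phi> \<le> 1" by (simp add: M2.prob_space[simplified])
  ultimately show "g_eps \<epsilon> u \<le> y" using y by (simp add: g_eps_def)
qed

lemma samplers_measure_le_exp:
  assumes Q: "Q \<in> samplers Ps (g_eps \<epsilon>)" and P: "P \<in> Ps" "P' \<in> Ps" and S: "S \<in> sets borel"
  shows "measure (Q P') S \<le> exp \<epsilon> * measure (Q P) S"
proof -
  have sp: "prob_space (Q P)" "sets (Q P) = sets borel" "prob_space (Q P')" "sets (Q P') = sets borel"
    using Q P unfolding samplers_def is_sampler_def by auto
  interpret Q1: prob_space "Q P" by (rule sp(1))
  interpret Q2: prob_space "Q P'" by (rule sp(3))
  define u where "u = measure (Q P) S"
  let ?T = "{1 - integral\<^sup>L (Q P') \<phi> |\<phi>. \<phi> \<in> borel_measurable (Q P) \<and> (\<forall>x. 0 \<le> \<phi> x \<and> \<phi> x \<le> 1)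
      \<and> integral\<^sup>L (Q P) \<phi> \<le> u}"
  have "g_eps \<epsilon> u \<le> tradeoff (Q P) (Q P') u"
    using Q P unfolding samplers_def fldp_def u_def by auto
  also have "tradeoff (Q P) (Q P') u \<le> 1 - measure (Q P') S"
    unfolding tradeoff_def
  proof (rule cInf_lower)
    show "1 - measure (Q P') S \<in> ?T"
      using S sp unfolding u_def
      by (intro CollectI exI[of _ "indicator S"]) (auto simp: Int_absorb2 sets.sets_into_space)
    have "0 \<le> 1 - integral\<^sup>L (Q P') \<phi>"
      if "\<phi> \<in> borel_measurable (Q P)" "\<And>x. 0 \<le> \<phi> x" "\<And>x. \<phi> x \<le> 1" for \<phi> :: "'a \<Rightarrow> real"
    proof -
      have "\<phi> \<in> borel_measurable (Q P')" using that(1) sp by (simp cong: measurable_cong_sets)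
      then have "integral\<^sup>L (Q P') \<phi> \<le> integral\<^sup>L (Q P') (\<lambda>_. 1)"
        using that by (intro integral_mono Q2.integrable_const_bound[of _ 1]) auto
      then show ?thesis by (simp add: Q2.prob_space)
    qed
    then show "bdd_below ?T" by (intro bdd_belowI[of _ 0]) blast
  qed
  finally have "1 - measure (Q P') S \<ge> 1 - exp \<epsilon> * u" by (simp add: g_eps_def)
  then show ?thesis unfolding u_def by simp
qed

lemma g_eps_0: "0 \<le> \<epsilon> \<Longrightarrow> g_eps \<epsilon> 0 = 1"
  by (simp add: g_eps_def)

lemma g_eps_fixed_point:
  "g_eps \<epsilon> (1 / (1 + exp \<epsilon>)) = 1 / (1 + exp \<epsilon>)"
proof -
  have pos: "0 < 1 + exp \<epsilon>" by (simp add: add_pos_pos)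
  then have "1 - exp \<epsilon> * (1 / (1 + exp \<epsilon>)) = 1 / (1 + exp \<epsilon>)"
    "exp (- \<epsilon>) * (1 - 1 / (1 + exp \<epsilon>)) = 1 / (1 + exp \<epsilon>)"
    by (simp_all add: exp_minus field_simps)
  then show ?thesis using pos by (simp add: g_eps_def)
qed

lemma le_conj01_g_eps:
  assumes "0 \<le> x" "x \<le> 1"
  shows "x * y - g_eps \<epsilon> x \<le> conj01 (g_eps \<epsilon>) y"
  unfolding conj01_def
proof (rule cSUP_upper)
  show "x \<in> {0..1}" using assms by simp
  have "z * y - g_eps \<epsilon> z \<le> \<bar>y\<bar>" if "z \<in> {0..1}" for z
  proof -
    have "z * y \<le> z * \<bar>y\<bar>" using that by (intro mult_left_mono) auto
    also have "\<dots> \<le> \<bar>y\<bar>" using that by (simp add: mult_left_le_one_le)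
    finally show ?thesis by (simp add: g_eps_def)
  qed
  then show "bdd_above ((\<lambda>x. x * y - g_eps \<epsilon> x) ` {0..1})" by (intro bdd_aboveI2)
qed

lemma c1_exp_le_c2_of_beta_condition:
  fixes c1 c2 k \<epsilon> \<beta> :: real
  assumes c1: "0 \<le> c1" "c1 < 1" and k: "2 \<le> k" "c2 - c1 = k * (1 - c1)"
    and eps: "0 \<le> \<epsilon>" and beta: "0 \<le> \<beta>"
    and cond: "1 + conj01 (g_eps \<epsilon>) (- exp \<beta>) \<le> (c2 - c1 * exp \<beta>) * (1 - c1) / (c2 - c1)"
  shows "c1 * exp \<epsilon> \<le> c2"
proof (rule ccontr)
  assume "\<not> c1 * exp \<epsilon> \<le> c2"
  define E X where "E = exp \<epsilon>" and "X = exp \<beta>"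
  have cE: "c2 < c1 * E" and E1: "1 \<le> E" and X1: "1 \<le> X"
    using \<open>\<not> c1 * exp \<epsilon> \<le> c2\<close> eps beta by (auto simp: E_def X_def)
  have "(c2 - c1 * X) * (1 - c1) / (c2 - c1) = (c2 - c1 * X) / k"
    unfolding k(2) using c1 by simp
  then have cond': "1 + conj01 (g_eps \<epsilon>) (- X) \<le> (c2 - c1 * X) / k"
    using cond unfolding X_def by simp
  have "0 \<le> 1 + conj01 (g_eps \<epsilon>) (- X)"
    using le_conj01_g_eps[of 0 "- X" \<epsilon>] g_eps_0[OF eps] by simp
  then have "0 \<le> (c2 - c1 * X) / k" using cond' by linarith
  then have cX: "c1 * X \<le> c2" using k by (simp add: zero_le_divide_iff)
  \<comment> \<open>evaluate the conjugate at the fixed point of the trade-off function\<close>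
  have "1 + (1 / (1 + E)) * (- X) - 1 / (1 + E) \<le> 1 + conj01 (g_eps \<epsilon>) (- X)"
    using le_conj01_g_eps[of "1 / (1 + E)" "- X" \<epsilon>] g_eps_fixed_point[of \<epsilon>] E1
    by (simp add: E_def add_pos_pos)
  also have "1 + (1 / (1 + E)) * (- X) - 1 / (1 + E) = (E - X) / (1 + E)"
  proof -
    have "1 + E \<noteq> 0" using E1 by simp
    then show ?thesis by (simp add: divide_simps)
  qed
  finally have "(E - X) / (1 + E) \<le> (c2 - c1 * X) / k" using cond' by linarith
  then have key: "k * (E - X) \<le> (c2 - c1 * X) * (1 + E)"
    using E1 k by (simp add: divide_le_eq le_divide_eq field_simps)
  define \<Phi> where "\<Phi> Y = k * (E - Y) - (c2 - c1 * Y) * (1 + E)" for Y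
  have "0 < \<Phi> E" unfolding \<Phi>_def using cE E1 by (simp add: mult_neg_pos)
  have "c1 + 2 * (1 - c1) \<le> c2" using k c1 mult_right_mono[of 2 k "1 - c1"] by linarith
  then have "2 < c1 * (1 + E)" using cE by (simp add: algebra_simps)
  moreover have "\<Phi> 1 = k * (c1 * (1 + E) - 2)"
    using k(2) unfolding \<Phi>_def by algebra
  ultimately have "0 < \<Phi> 1" using k by simp
  have "0 < c1" using cE k c1 by (cases "c1 = 0") auto
  moreover have "c1 * X < c1 * E" using cX cE by linarith
  ultimately have "X < E" by simp
  \<comment> \<open>\<open>\<Phi>\<close> is affine and positive at both ends of \<open>[1, E]\<close>\<close>
  have "(E - 1) * \<Phi> X = (E - X) * \<Phi> 1 + (X - 1) * \<Phi> E" unfolding \<Phi>_def by (simp add: algebra_simps)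
  with \<open>X < E\<close> X1 \<open>0 < \<Phi> 1\<close> \<open>0 < \<Phi> E\<close> have "0 < \<Phi> X"
    by (smt (verit) mult_nonneg_nonneg mult_pos_pos zero_less_mult_iff)
  then show False using key unfolding \<Phi>_def by simp
qed

section \<open>The mixture sampler\<close>

definition mixture_sampler :: "real \<Rightarrow> ('a::euclidean_space \<Rightarrow> real) \<Rightarrow> 'a measure \<Rightarrow> 'a measure" where
  "mixture_sampler lam h P =
     density lborel (\<lambda>x. ennreal lam * RN_deriv lborel P x + ennreal (1 - lam) * ennreal (h x))"

lemma PclassE:
  assumes "P \<in> Pclass c1 c2 h"
  obtains p where "P = density lborel (\<lambda>x. ennreal (p x))" "is_density p"
    "\<And>x. c1 * h x \<le> p x" "\<And>x. p x \<le> c2 * h x"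
proof -
  obtain p where "P = density lborel (\<lambda>x. ennreal (p x))" "is_density p"
    "\<forall>x. c1 * h x \<le> p x \<and> p x \<le> c2 * h x"
    using assms unfolding Pclass_def by blast
  then show thesis by (intro that) auto
qed

lemma is_densityD:
  assumes "is_density p"
  shows "p \<in> borel_measurable borel" "0 \<le> p x" "prob_space (density lborel (\<lambda>x. ennreal (p x)))"
proof -
  show pm: "p \<in> borel_measurable borel" "0 \<le> p x" using assms by (auto simp: is_density_def)
  have "emeasure (density lborel (\<lambda>x. ennreal (p x))) (space lborel) = 1"
    using assms pm(1) by (subst emeasure_density) (auto simp: is_density_def)
  then show "prob_space (density lborel (\<lambda>x. ennreal (p x)))" by (intro prob_spaceI) simp
qed

lemma mixture_sampler_density:
  fixes p h :: "'a::euclidean_space \<Rightarrow> real"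
  assumes p: "is_density p" and h: "is_density h" and lam: "0 \<le> lam" "lam \<le> 1"
  shows "mixture_sampler lam h (density lborel p) = density lborel (\<lambda>x. lam * p x + (1 - lam) * h x)"
    and "is_density (\<lambda>x. lam * p x + (1 - lam) * h x)"
proof -
  note [measurable] = is_densityD(1)[OF p] is_densityD(1)[OF h]
  have nonneg: "0 \<le> p x" "0 \<le> h x" for x using is_densityD(2) p h by auto
  have "AE x in lborel. ennreal (p x) = RN_deriv lborel (density lborel (\<lambda>x. ennreal (p x))) x"
    by (rule sigma_finite_measure.RN_deriv_unique[OF sigma_finite_lborel]) auto
  then have "AE x in lborel. ennreal lam * RN_deriv lborel (density lborel p) x + ennreal (1 - lam) * ennreal (h x)
      = ennreal (lam * p x + (1 - lam) * h x)"
    by eventually_elim (use lam nonneg in \<open>simp add: ennreal_mult\<close>)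
  then show "mixture_sampler lam h (density lborel p) = density lborel (\<lambda>x. lam * p x + (1 - lam) * h x)"
    unfolding mixture_sampler_def by (intro density_cong) auto
  have "(\<integral>\<^sup>+ x. ennreal (lam * p x + (1 - lam) * h x) \<partial>lborel)
      = (\<integral>\<^sup>+ x. ennreal lam * ennreal (p x) + ennreal (1 - lam) * ennreal (h x) \<partial>lborel)"
    using lam nonneg by (intro nn_integral_cong) (simp add: ennreal_mult)
  also have "\<dots> = ennreal lam * (\<integral>\<^sup>+ x. ennreal (p x) \<partial>lborel) + ennreal (1 - lam) * (\<integral>\<^sup>+ x. ennreal (h x) \<partial>lborel)"
    by (simp add: nn_integral_add nn_integral_cmult)
  also have "\<dots> = 1" using p h lam by (simp add: is_density_def flip: ennreal_plus)
  finally show "is_density (\<lambda>x. lam * p x + (1 - lam) * h x)"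
    using lam nonneg by (simp add: is_density_def)
qed

lemma mixture_ratio:
  fixes lam c p h :: real
  assumes lam: "0 \<le> lam" "lam \<le> 1" and c: "0 \<le> c"
  shows mixture_ratio_upper: "p \<le> c * h \<Longrightarrow> p \<le> c / (lam * c + (1 - lam)) * (lam * p + (1 - lam) * h)"
    and mixture_ratio_lower: "c * h \<le> p \<Longrightarrow> c / (lam * c + (1 - lam)) * (lam * p + (1 - lam) * h) \<le> p"
proof -
  define m where "m = lam * c + (1 - lam)"
  have "0 \<le> m" using lam c by (simp add: m_def)
  have id: "p - c / m * (lam * p + (1 - lam) * h) = (1 - lam) / m * (p - c * h)" if "0 < m"
    using that by (simp add: m_def field_simps)
  have degenerate: "m = 0 \<Longrightarrow> c = 0"
    using lam c by (auto simp: m_def add_nonneg_eq_0_iff)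
  show "p \<le> c / m * (lam * p + (1 - lam) * h)" if "p \<le> c * h"
  proof (cases "m = 0")
    case False
    have "(1 - lam) / m * (p - c * h) \<le> 0"
      using \<open>0 \<le> m\<close> lam that by (intro mult_nonneg_nonpos divide_nonneg_nonneg) auto
    then show ?thesis using id False \<open>0 \<le> m\<close> by simp
  qed (use that degenerate in simp)
  show "c / m * (lam * p + (1 - lam) * h) \<le> p" if "c * h \<le> p"
  proof (cases "m = 0")
    case False
    have "0 \<le> (1 - lam) / m * (p - c * h)"
      using \<open>0 \<le> m\<close> lam that by (intro mult_nonneg_nonneg divide_nonneg_nonneg) auto
    then show ?thesis using id False \<open>0 \<le> m\<close> by simp
  qed (use that degenerate in simp)
qed

lemma mixture_sampler_in_samplers:
  fixes h :: "'a::euclidean_space \<Rightarrow> real"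
  assumes h: "is_density h" and lam: "0 \<le> lam" "lam \<le> 1" and eps: "0 \<le> \<epsilon>"
    and ldp: "lam * c2 + (1 - lam) = exp \<epsilon> * (lam * c1 + (1 - lam))"
  shows "mixture_sampler lam h \<in> samplers (Pclass c1 c2 h) (g_eps \<epsilon>)"
proof -
  note h_nonneg = is_densityD(2)[OF h]
  have ratio: "lam * p' x + (1 - lam) * h x \<le> exp \<epsilon> * (lam * p x + (1 - lam) * h x)"
    if "\<And>x. c1 * h x \<le> p x" "\<And>x. p' x \<le> c2 * h x" for p p' :: "'a \<Rightarrow> real" and x
  proof -
    have "lam * p' x + (1 - lam) * h x \<le> (lam * c2 + (1 - lam)) * h x"
      using mult_left_mono[OF that(2)[of x] lam(1)] by (simp add: algebra_simps)
    also have "\<dots> = exp \<epsilon> * ((lam * c1 + (1 - lam)) * h x)" unfolding ldp by simp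
    also have "\<dots> \<le> exp \<epsilon> * (lam * p x + (1 - lam) * h x)"
      using mult_left_mono[OF that(1)[of x] lam(1)] by (intro mult_left_mono) (auto simp: algebra_simps)
    finally show ?thesis .
  qed
  show ?thesis
    unfolding samplers_def is_sampler_def fldp_def
  proof (intro CollectI conjI ballI)
    fix P assume "P \<in> Pclass c1 c2 h"
    then obtain p where "P = density lborel (\<lambda>x. ennreal (p x))" "is_density p" by (rule PclassE) blast
    then show "prob_space (mixture_sampler lam h P)"
      using mixture_sampler_density[OF _ h lam] is_densityD(3) by metis
    show "sets (mixture_sampler lam h P) = sets borel" by (simp add: mixture_sampler_def)
  next
    fix P P' and u :: real assume PP': "P \<in> Pclass c1 c2 h" "P' \<in> Pclass c1 c2 h" and u: "u \<in> {0..1}"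
    obtain p where P: "P = density lborel (\<lambda>x. ennreal (p x))" "is_density p"
        "\<And>x. c1 * h x \<le> p x" "\<And>x. p x \<le> c2 * h x"
      using PP'(1) by (rule PclassE) blast
    obtain p' where P': "P' = density lborel (\<lambda>x. ennreal (p' x))" "is_density p'"
        "\<And>x. c1 * h x \<le> p' x" "\<And>x. p' x \<le> c2 * h x"
      using PP'(2) by (rule PclassE) blast
    note q = mixture_sampler_density[OF P(2) h lam] and q' = mixture_sampler_density[OF P'(2) h lam]
    show "g_eps \<epsilon> u \<le> tradeoff (mixture_sampler lam h P) (mixture_sampler lam h P') u"
      unfolding P(1) P'(1) q(1) q'(1)
      using is_densityD[OF q(2)] is_densityD[OF q'(2)] ratio[OF P(3) P'(4)] ratio[OF P'(3) P(4)] eps u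
      by (intro g_eps_le_tradeoff_density) auto
  qed
qed

lemma fdiv_mixture_sampler_le:
  fixes h :: "'a::euclidean_space \<Rightarrow> real"
  assumes h: "is_density h" and P: "P \<in> Pclass c1 c2 h" and c: "0 \<le> c1" "c1 \<le> c2"
    and lam: "0 \<le> lam" "lam \<le> 1"
    and r1: "r1 = c1 / (lam * c1 + (1 - lam))" and r2: "r2 = c2 / (lam * c2 + (1 - lam))"
    and r12: "r1 \<le> r2" and a: "a < 1" "a * r2 + (1 - a) * r1 = 1"
    and cf: "convex_on {0<..} f" and f1: "f 1 = 0"
  shows "fdiv f P (mixture_sampler lam h P) \<le> ereal (a * f r2) + ereal (1 - a) * f_ext f r1"
proof -
  obtain p where P_eq: "P = density lborel (\<lambda>x. ennreal (p x))" and p: "is_density p"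
    and bounds: "\<And>x. c1 * h x \<le> p x" "\<And>x. p x \<le> c2 * h x"
    using P by (rule PclassE) blast
  define q where "q x = lam * p x + (1 - lam) * h x" for x
  have Q_eq: "mixture_sampler lam h P = density lborel (\<lambda>x. ennreal (q x))" and q: "is_density q"
    using mixture_sampler_density[OF p h lam] unfolding P_eq q_def by auto
  have "0 \<le> r1" "0 \<le> r2" using c lam unfolding r1 r2 by auto
  note dens = is_densityD[OF p] is_densityD[OF q]
  have sets_P: "sets P = sets borel" using P_eq by simp
  have "p x \<le> r2 * q x" for x
    unfolding r2 q_def using mixture_ratio_upper[OF lam _ bounds(2)] c by simp
  then have upper: "measure P B \<le> r2 * measure (mixture_sampler lam h P) B" if "B \<in> sets P" for B
    unfolding Q_eq unfolding P_eq using that dens \<open>0 \<le> r2\<close> sets_P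
    by (intro measure_density_le_mult) (auto simp: prob_space_def)
  have lower: "r1 * measure (mixture_sampler lam h P) B \<le> measure P B" if "B \<in> sets P" for B
  proof (cases "r1 = 0")
    case False
    then have "0 < r1" using \<open>0 \<le> r1\<close> by simp
    have "r1 * q x \<le> p x" for x
      unfolding r1 q_def using mixture_ratio_lower[OF lam c(1) bounds(1)] by simp
    then have "q x \<le> 1 / r1 * p x" for x
      using \<open>0 < r1\<close> by (simp add: field_simps)
    then have "measure (mixture_sampler lam h P) B \<le> 1 / r1 * measure P B"
      unfolding Q_eq unfolding P_eq using that dens \<open>0 < r1\<close> sets_P
      by (intro measure_density_le_mult) (auto simp: prob_space_def)
    then show ?thesis using \<open>0 < r1\<close> by (simp add: field_simps)
  qed simp
  interpret prob_pair P "mixture_sampler lam h P"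
    using dens(3,6) unfolding Q_eq by (intro prob_pair.intro) (simp_all add: P_eq)
  show ?thesis by (rule fdiv_le_chord_value[OF upper lower \<open>0 \<le> r1\<close> r12 a cf f1])
qed

section \<open>Lower bound for arbitrary private samplers\<close>

lemma hyperplane_in_null_sets_lborel:
  fixes b :: "'a::euclidean_space"
  assumes "b \<noteq> 0"
  shows "{x. x \<bullet> b = t} \<in> null_sets lborel"
proof -
  have "negligible {x. b \<bullet> x = t}" using assms by (intro negligible_hyperplane) auto
  then have "{x. b \<bullet> x = t} \<in> null_sets lebesgue" by (simp add: negligible_iff_null_sets)
  moreover have "{x. b \<bullet> x = t} \<in> sets lborel" by simp
  ultimately have "{x. b \<bullet> x = t} \<in> null_sets lborel" using null_sets_completion_iff by blast
  moreover have "{x. x \<bullet> b = t} = {x. b \<bullet> x = t}" by (simp add: inner_commute)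
  ultimately show ?thesis by simp
qed

lemma IVT_at_bot_at_top:
  fixes F :: "real \<Rightarrow> real"
  assumes cont: "\<And>x. isCont F x" and bot: "(F \<longlongrightarrow> 0) at_bot" and top: "(F \<longlongrightarrow> 1) at_top"
    and y: "0 < y" "y < 1"
  obtains t where "F t = y"
proof -
  obtain a where a: "\<And>t. t \<le> a \<Longrightarrow> F t < y"
    using order_tendstoD(2)[OF bot y(1)] unfolding eventually_at_bot_linorder by blast
  obtain b where b: "\<And>t. b \<le> t \<Longrightarrow> y < F t"
    using order_tendstoD(1)[OF top y(2)] unfolding eventually_at_top_linorder by blast
  have "F a \<le> y" "y \<le> F (max a b)" "a \<le> max a b" using a[of a] b[of "max a b"] by auto
  moreover have "continuous_on {a..max a b} F"
    using cont by (intro continuous_at_imp_continuous_on) auto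
  ultimately obtain t where "F t = y" using IVT'[of F a y "max a b"] by auto
  then show ?thesis by (rule that)
qed

lemma (in real_distribution) equal_mass_intervals:
  fixes k :: nat
  assumes atomless: "\<And>t. measure M {t} = 0" and k: "0 < k"
  obtains I :: "nat \<Rightarrow> real set" where "\<And>i. I i \<in> sets borel"
    "\<And>i j. i < k \<Longrightarrow> j < k \<Longrightarrow> i \<noteq> j \<Longrightarrow> I i \<inter> I j = {}"
    "\<And>i. i < k \<Longrightarrow> measure M (I i) = 1 / k"
proof -
  define F where "F = cdf M"
  have cont: "isCont F x" for x unfolding F_def using isCont_cdf atomless by simp
  define t where "t j = (SOME s. F s = real j / real k)" for j :: nat
  have Ft: "F (t j) = real j / real k" if "0 < j" "j < k" for j
  proof -
    have "0 < real j / real k" "real j / real k < 1" using that by auto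
    then obtain s where "F s = real j / real k"
      using IVT_at_bot_at_top[OF cont cdf_lim_at_bot[folded F_def] cdf_lim_at_top_prob[folded F_def]]
      by blast
    then show ?thesis unfolding t_def by (rule someI)
  qed
  have t_less: "t i < t j" if "0 < i" "i < j" "j < k" for i j
  proof (rule ccontr)
    assume "\<not> t i < t j"
    then have "F (t j) \<le> F (t i)" unfolding F_def by (intro cdf_nondecreasing) auto
    moreover have "real i / real k < real j / real k" using that by (simp add: divide_strict_right_mono)
    ultimately show False using Ft[of i] Ft[of j] that by simp
  qed
  define I where "I i = {s. (i = 0 \<or> t i < s) \<and> (Suc i = k \<or> s \<le> t (Suc i))}" for i
  show ?thesis
  proof
    fix i
    have "I i = (if i = 0 then UNIV else {t i<..}) \<inter> (if Suc i = k then UNIV else {..t (Suc i)})"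
      by (auto simp: I_def)
    then show "I i \<in> sets borel" by simp
  next
    have disj: "I i \<inter> I j = {}" if "i < j" "j < k" for i j
    proof -
      have "t (Suc i) \<le> t j"
        using t_less[of "Suc i" j] that by (cases "Suc i = j") auto
      then show ?thesis using that by (auto simp: I_def)
    qed
    fix i j assume "i < k" "j < k" "i \<noteq> j"
    then show "I i \<inter> I j = {}"
      using disj[of i j] disj[of j i] by (cases "i < j") auto
  next
    fix i assume i: "i < k"
    consider "i = 0" "Suc i = k" | "i = 0" "Suc i < k" | "0 < i" "Suc i < k" | "0 < i" "Suc i = k"
      using i by linarith
    then show "measure M (I i) = 1 / real k"
    proof cases
      case 1
      then have "I i = space M" "real k = 1" by (auto simp: I_def)
      then show ?thesis using prob_space by simp
    next
      case 2
      then have "I i = {..t 1}" by (auto simp: I_def)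
      then show ?thesis using Ft[of 1] 2 by (simp add: F_def cdf_def)
    next
      case 3
      then have "I i = {t i<..t (Suc i)}" by (auto simp: I_def)
      then have "measure M (I i) = F (t (Suc i)) - F (t i)"
        unfolding F_def using cdf_diff_eq[OF t_less[of i "Suc i"]] 3 by simp
      then show ?thesis using Ft[of i] Ft[of "Suc i"] 3 by (simp add: field_simps)
    next
      case 4
      then have "I i = UNIV - {..t i}" by (auto simp: I_def)
      then have "measure M (I i) = 1 - F (t i)"
        unfolding F_def cdf_def using prob_compl[of "{..t i}"] by simp
      then show ?thesis using Ft[of i] 4 by (simp add: field_simps)
    qed
  qed
qed

text \<open>Slabs along a coordinate direction: hyperplanes are Lebesgue null sets, so the distribution
  of \<open>x \<bullet> b\<close> under \<open>h\<close> has no atoms.\<close>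
lemma equal_mass_partition:
  fixes h :: "'a::euclidean_space \<Rightarrow> real" and k :: nat
  assumes h: "is_density h" and k: "0 < k"
  obtains A :: "nat \<Rightarrow> 'a set" where "\<And>i. A i \<in> sets borel"
    "\<And>i j. i < k \<Longrightarrow> j < k \<Longrightarrow> i \<noteq> j \<Longrightarrow> A i \<inter> A j = {}"
    "\<And>i. i < k \<Longrightarrow> measure (density lborel (\<lambda>x. ennreal (h x))) (A i) = 1 / k"
proof -
  let ?H = "density lborel (\<lambda>x. ennreal (h x))"
  interpret H: prob_space ?H by (rule is_densityD(3)[OF h])
  note [measurable] = is_densityD(1)[OF h]
  obtain b :: 'a where "b \<in> Basis" using nonempty_Basis by blast
  then have "b \<noteq> 0" by auto
  define X where "X x = x \<bullet> b" for x :: 'a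
  have X[measurable]: "X \<in> borel_measurable borel" unfolding X_def by simp
  define M where "M = distr ?H borel X"
  interpret M: real_distribution M unfolding M_def by (intro H.real_distribution_distr) simp
  have "measure M {t} = 0" for t
  proof -
    have "{x. x \<bullet> b = t} \<in> null_sets ?H"
      using absolutely_continuousI_density[of "\<lambda>x. ennreal (h x)" lborel]
        hyperplane_in_null_sets_lborel[OF \<open>b \<noteq> 0\<close>, of t]
      unfolding absolutely_continuous_def by auto
    moreover have "X -` {t} \<inter> space ?H = {x. x \<bullet> b = t}" by (auto simp: X_def)
    ultimately show ?thesis unfolding M_def by (subst measure_distr) (auto simp: measure_def)
  qed
  then obtain I where I: "\<And>i. I i \<in> sets borel" "\<And>i j. i < k \<Longrightarrow> j < k \<Longrightarrow> i \<noteq> j \<Longrightarrow> I i \<inter> I j = {}"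
    "\<And>i. i < k \<Longrightarrow> measure M (I i) = 1 / k"
    using M.equal_mass_intervals[OF _ k] by blast
  show ?thesis
  proof
    show "X -` I i \<in> sets borel" for i using measurable_sets[OF X I(1)] by simp
    show "X -` I i \<inter> X -` I j = {}" if "i < k" "j < k" "i \<noteq> j" for i j
      using I(2)[OF that] by auto
    show "measure ?H (X -` I i) = 1 / k" if "i < k" for i
      using I(1)[of i] I(3)[OF that] unfolding M_def by (subst (asm) measure_distr) auto
  qed
qed

lemma Pclass_prob_space:
  assumes "P \<in> Pclass c1 c2 h"
  shows "prob_space P" "sets P = sets borel"
  using assms by (auto elim!: PclassE dest: is_densityD(3))

lemma two_level_density:
  fixes h :: "'a::euclidean_space \<Rightarrow> real" and k :: nat
  assumes h: "is_density h" and c: "0 \<le> c1" "c1 \<le> c2"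
    and k: "0 < k" "c2 - c1 = real k * (1 - c1)" and A: "A \<in> sets borel" "measure (density lborel (\<lambda>x. ennreal (h x))) A = 1 / k"
  defines "P \<equiv> density lborel (\<lambda>x. ennreal ((if x \<in> A then c2 else c1) * h x))"
  shows "P \<in> Pclass c1 c2 h" and "measure P A = c2 / k" and "measure P (UNIV - A) = 1 - c2 / k"
proof -
  let ?H = "density lborel (\<lambda>x. ennreal (h x))"
  interpret H: prob_space ?H by (rule is_densityD(3)[OF h])
  note [measurable] = is_densityD(1)[OF h] A(1)
  have h0: "0 \<le> h x" for x by (rule is_densityD(2)[OF h])
  have emeasure_P: "emeasure P B = ennreal c2 * emeasure ?H (A \<inter> B) + ennreal c1 * emeasure ?H (B - A)"
    if B: "B \<in> sets borel" for B
  proof -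
    have "emeasure P B = (\<integral>\<^sup>+ x. ennreal ((if x \<in> A then c2 else c1) * h x) * indicator B x \<partial>lborel)"
      unfolding P_def using B by (subst emeasure_density) auto
    also have "\<dots> = (\<integral>\<^sup>+ x. ennreal c2 * (ennreal (h x) * indicator (A \<inter> B) x)
        + ennreal c1 * (ennreal (h x) * indicator (B - A) x) \<partial>lborel)"
      using c h0 by (intro nn_integral_cong) (auto simp: indicator_def ennreal_mult)
    also have "\<dots> = ennreal c2 * emeasure ?H (A \<inter> B) + ennreal c1 * emeasure ?H (B - A)"
      using B by (simp add: nn_integral_add nn_integral_cmult emeasure_density)
    finally show ?thesis .
  qed
  have HA: "emeasure ?H A = ennreal (1 / k)" "emeasure ?H (UNIV - A) = ennreal (1 - 1 / k)"
    using A H.prob_compl[of A] by (simp_all add: H.emeasure_eq_measure)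
  have "c2 / k + c1 * (1 - 1 / k) = 1"
    using k by (simp add: field_simps)
  moreover have "0 \<le> 1 - 1 / real k" using k by simp
  ultimately have "emeasure P UNIV = 1"
    using emeasure_P[of UNIV] HA c
    by (simp add: ennreal_mult[symmetric] ennreal_plus[symmetric] del: ennreal_plus)
  then have P_prob: "prob_space P" by (intro prob_spaceI) (simp add: P_def)
  then interpret P: prob_space P .
  show "measure P A = c2 / k"
    using emeasure_P[of A] HA c P.emeasure_eq_measure by (simp flip: ennreal_mult)
  then show "measure P (UNIV - A) = 1 - c2 / k"
    using P.prob_compl[of A] by (simp add: P_def)
  have "(\<integral>\<^sup>+ x. ennreal ((if x \<in> A then c2 else c1) * h x) \<partial>lborel) = emeasure P UNIV"
    unfolding P_def by (subst emeasure_density) auto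
  then show "P \<in> Pclass c1 c2 h"
    unfolding Pclass_def is_density_def using \<open>emeasure P UNIV = 1\<close> c h0
    by (intro CollectI exI[of _ "\<lambda>x. (if x \<in> A then c2 else c1) * h x"])
      (auto simp: P_def intro: mult_right_mono)
qed

lemma exists_ge_average:
  fixes L :: "nat \<Rightarrow> real"
  assumes "0 < k"
  shows "\<exists>i<k. (\<Sum>j<k. L j) / k \<le> L i"
proof (rule ccontr)
  assume "\<not> ?thesis"
  then have "(\<Sum>i<k. L i) < (\<Sum>i<k. (\<Sum>j<k. L j) / k)"
    using assms by (intro sum_strict_mono) auto
  then show False using assms by simp
qed

lemma (in prob_space) sum_off_diagonal_prob_le:
  fixes A :: "nat \<Rightarrow> 'a set" and k :: nat
  assumes A: "\<And>i. i < k \<Longrightarrow> A i \<in> events" "\<And>i j. i < k \<Longrightarrow> j < k \<Longrightarrow> i \<noteq> j \<Longrightarrow> A i \<inter> A j = {}"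
    and j: "j < k"
  shows "(\<Sum>i<k. if i \<noteq> j then prob (A i) else 0) \<le> 1 - prob (A j)"
proof -
  have "(\<Sum>i<k. if i \<noteq> j then prob (A i) else 0) = (\<Sum>i\<in>{..<k} - {j}. prob (A i))"
    by (rule sum.mono_neutral_cong_right) auto
  also have "\<dots> = prob (\<Union>i\<in>{..<k} - {j}. A i)"
    using A by (intro finite_measure_finite_Union[symmetric]) (auto simp: disjoint_family_on_def)
  also have "\<dots> \<le> prob (space M - A j)"
  proof (rule finite_measure_mono)
    show "(\<Union>i\<in>{..<k} - {j}. A i) \<subseteq> space M - A j"
      using A j sets.sets_into_space by blast
    show "space M - A j \<in> events" using A(1)[OF j] by auto
  qed
  also have "\<dots> = 1 - prob (A j)" using A(1)[OF j] by (simp add: prob_compl)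
  finally show ?thesis .
qed

text \<open>Under \<open>E\<close>-LDP the diagonal masses \<open>Q\<^sub>i(A\<^sub>i)\<close> are bounded by the off-diagonal ones, whose
  column sums are at most \<open>1 - Q\<^sub>j(A\<^sub>j)\<close>.\<close>
lemma average_diagonal_mass_le:
  fixes A :: "nat \<Rightarrow> 'a set" and Q :: "nat \<Rightarrow> 'a measure" and k :: nat
  assumes Q: "\<And>j. j < k \<Longrightarrow> prob_space (Q j)" "\<And>j. j < k \<Longrightarrow> sets (Q j) = sets M"
    and A: "\<And>i. i < k \<Longrightarrow> A i \<in> sets M" "\<And>i j. i < k \<Longrightarrow> j < k \<Longrightarrow> i \<noteq> j \<Longrightarrow> A i \<inter> A j = {}"
    and ldp: "\<And>i j. i < k \<Longrightarrow> j < k \<Longrightarrow> measure (Q i) (A i) \<le> E * measure (Q j) (A i)"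
    and k: "0 < k" and E: "0 < E"
  shows "(\<Sum>i<k. measure (Q i) (A i)) / k \<le> E / (real k - 1 + E)"
proof -
  define m where "m i = measure (Q i) (A i)" for i
  define S where "S = (\<Sum>i<k. m i)"
  have row: "(\<Sum>j<k. if j \<noteq> i then m i else 0) = (real k - 1) * m i" if "i < k" for i
  proof -
    have "{..<k} \<inter> {j. j \<noteq> i} = {..<k} - {i}" by auto
    then show ?thesis using that by (simp add: sum.If_cases)
  qed
  have "(real k - 1) * S = (\<Sum>i<k. \<Sum>j<k. if j \<noteq> i then m i else 0)"
    using row by (simp add: S_def sum_distrib_left)
  also have "\<dots> \<le> (\<Sum>i<k. \<Sum>j<k. if j \<noteq> i then E * measure (Q j) (A i) else 0)"
    using ldp by (intro sum_mono) (auto simp: m_def)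
  also have "\<dots> = E * (\<Sum>j<k. \<Sum>i<k. if i \<noteq> j then measure (Q j) (A i) else 0)"
    by (subst sum.swap) (auto simp: sum_distrib_left intro!: sum.cong)
  also have "\<dots> \<le> E * (\<Sum>j<k. 1 - m j)"
    using prob_space.sum_off_diagonal_prob_le[OF Q(1)] Q(2) A E
    by (intro mult_left_mono sum_mono) (auto simp: m_def)
  finally have "S * (real k - 1 + E) \<le> E * real k"
    by (simp add: S_def sum_subtractf algebra_simps)
  moreover have "0 < real k - 1 + E" using k E by linarith
  ultimately have "S \<le> E * real k / (real k - 1 + E)" by (simp add: pos_le_divide_eq)
  then show ?thesis using k by (simp add: S_def m_def divide_le_eq)
qed

lemma ldp_two_level_family:
  fixes h :: "'a::euclidean_space \<Rightarrow> real" and k :: nat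
  assumes h: "is_density h" and c: "0 \<le> c1" "c1 \<le> c2" and k: "c2 - c1 = real k * (1 - c1)" "0 < k"
    and Q: "Q \<in> samplers (Pclass c1 c2 h) (g_eps \<epsilon>)"
  obtains P :: "nat \<Rightarrow> 'a measure" and A :: "nat \<Rightarrow> 'a set"
  where "\<And>i. i < k \<Longrightarrow> P i \<in> Pclass c1 c2 h" "\<And>i. A i \<in> sets borel"
    "\<And>i. i < k \<Longrightarrow> measure (P i) (A i) = c2 / k" "\<And>i. i < k \<Longrightarrow> measure (P i) (UNIV - A i) = 1 - c2 / k"
    "(\<Sum>i<k. measure (Q (P i)) (A i)) / k \<le> exp \<epsilon> / (real k - 1 + exp \<epsilon>)"
proof -
  obtain A where A_borel: "\<And>i. A i \<in> sets borel"
    and A_disj: "\<And>i j. i < k \<Longrightarrow> j < k \<Longrightarrow> i \<noteq> j \<Longrightarrow> A i \<inter> A j = {}"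
    and A_mass: "\<And>i. i < k \<Longrightarrow> measure (density lborel (\<lambda>x. ennreal (h x))) (A i) = 1 / k"
    using equal_mass_partition[OF h k(2)] by blast
  define P where "P i = density lborel (\<lambda>x. ennreal ((if x \<in> A i then c2 else c1) * h x))" for i
  note P_props = two_level_density[OF h c k(2,1) A_borel A_mass, folded P_def]
  have "(\<Sum>i<k. measure (Q (P i)) (A i)) / k \<le> exp \<epsilon> / (real k - 1 + exp \<epsilon>)"
    using Q P_props(1) A_borel A_disj samplers_measure_le_exp[OF Q P_props(1) P_props(1) A_borel] k(2)
    by (intro average_diagonal_mass_le[where M = borel]) (auto simp: samplers_def is_sampler_def)
  with P_props A_borel show ?thesis by (intro that)
qed

lemma minimax_lower_bound_affine:
  fixes h :: "'a::euclidean_space \<Rightarrow> real" and k :: nat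
  assumes h: "is_density h" and c: "0 \<le> c1" "c1 \<le> c2" and k: "c2 - c1 = real k * (1 - c1)" "0 < k"
    and Q: "Q \<in> samplers (Pclass c1 c2 h) (g_eps \<epsilon>)" and cf: "convex_on {0<..} f"
    and minor1: "\<And>t. 0 < t \<Longrightarrow> \<alpha>1 * t + \<gamma>1 \<le> f t" and minor2: "\<And>t. 0 < t \<Longrightarrow> \<alpha>2 * t + \<gamma>2 \<le> f t"
    and \<gamma>: "\<gamma>2 \<le> \<gamma>1"
    and a: "a = exp \<epsilon> / (real k - 1 + exp \<epsilon>)" "a * r2 = c2 / k" "(1 - a) * r1 = 1 - c2 / k"
  shows "ereal (a * (\<alpha>2 * r2 + \<gamma>2) + (1 - a) * (\<alpha>1 * r1 + \<gamma>1)) \<le> (SUP P\<in>Pclass c1 c2 h. fdiv f P (Q P))"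
proof -
  obtain P A where P: "\<And>i. i < k \<Longrightarrow> P i \<in> Pclass c1 c2 h" and A: "\<And>i. A i \<in> sets borel"
    and P_mass: "\<And>i. i < k \<Longrightarrow> measure (P i) (A i) = c2 / k"
      "\<And>i. i < k \<Longrightarrow> measure (P i) (UNIV - A i) = 1 - c2 / k"
    and avg: "(\<Sum>i<k. measure (Q (P i)) (A i)) / k \<le> a"
    using ldp_two_level_family[OF h c k Q] unfolding a(1) by blast
  define m where "m i = measure (Q (P i)) (A i)" for i
  define L where "L i = \<alpha>2 * (c2 / k) + \<gamma>2 * m i + \<alpha>1 * (1 - c2 / k) + \<gamma>1 * (1 - m i)" for i
  have L_le: "ereal (L i) \<le> fdiv f (P i) (Q (P i))" if i: "i < k" for i
  proof -
    have Q_i: "prob_space (Q (P i))" "sets (Q (P i)) = sets borel"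
      using Q P[OF i] by (auto simp: samplers_def is_sampler_def)
    interpret prob_pair "P i" "Q (P i)"
      using Pclass_prob_space[OF P[OF i]] Q_i by (intro prob_pair.intro) simp_all
    have "space (P i) = UNIV" "A i \<in> sets (P i)" using Pclass_prob_space(2)[OF P[OF i]] A
      by (simp_all add: sets_eq_imp_space_eq)
    moreover have "measure (Q (P i)) (UNIV - A i) = 1 - m i"
      using prob_space.prob_compl[OF Q_i(1), of "A i"] Q_i(2) A
      by (simp add: m_def sets_eq_imp_space_eq[OF Q_i(2)])
    ultimately show ?thesis
      using fdiv_ge_split_affine[OF cf minor1 minor2, of "A i"] P_mass[OF i]
      by (simp add: L_def m_def)
  qed
  have "(\<Sum>i<k. L i) / k = \<alpha>2 * (c2 / k) + \<alpha>1 * (1 - c2 / k) + \<gamma>1 + (\<gamma>2 - \<gamma>1) * ((\<Sum>i<k. m i) / k)"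
  proof -
    have "L i = (\<alpha>2 * (c2 / k) + \<alpha>1 * (1 - c2 / k) + \<gamma>1) + (\<gamma>2 - \<gamma>1) * m i" for i
      unfolding L_def by (simp add: algebra_simps)
    then have "(\<Sum>i<k. L i) = k * (\<alpha>2 * (c2 / k) + \<alpha>1 * (1 - c2 / k) + \<gamma>1) + (\<gamma>2 - \<gamma>1) * (\<Sum>i<k. m i)"
      by (simp add: sum.distrib sum_distrib_left)
    then show ?thesis using k(2) by (simp add: field_simps)
  qed
  moreover have "(\<gamma>2 - \<gamma>1) * a \<le> (\<gamma>2 - \<gamma>1) * ((\<Sum>i<k. m i) / k)"
    using avg \<gamma> unfolding m_def by (intro mult_left_mono_neg) auto
  moreover have "a * (\<alpha>2 * r2 + \<gamma>2) + (1 - a) * (\<alpha>1 * r1 + \<gamma>1)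
      = \<alpha>2 * (a * r2) + \<alpha>1 * ((1 - a) * r1) + \<gamma>1 + (\<gamma>2 - \<gamma>1) * a"
    by (simp add: algebra_simps)
  ultimately have "a * (\<alpha>2 * r2 + \<gamma>2) + (1 - a) * (\<alpha>1 * r1 + \<gamma>1) \<le> (\<Sum>i<k. L i) / k"
    unfolding a(2,3) by linarith
  moreover obtain i where "i < k" "(\<Sum>j<k. L j) / k \<le> L i"
    using exists_ge_average[OF k(2)] by blast
  ultimately have "ereal (a * (\<alpha>2 * r2 + \<gamma>2) + (1 - a) * (\<alpha>1 * r1 + \<gamma>1)) \<le> ereal (L i)"
    by simp
  also have "\<dots> \<le> fdiv f (P i) (Q (P i))" by (rule L_le) fact
  also have "\<dots> \<le> (SUP P\<in>Pclass c1 c2 h. fdiv f P (Q P))"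
    using P[OF \<open>i < k\<close>] by (rule SUP_upper)
  finally show ?thesis .
qed

lemma Nats_ratio_obtain:
  fixes c1 c2 :: real
  assumes "(c2 - c1) / (1 - c1) \<in> \<nat>" "c1 < 1" "1 < c2"
  obtains k :: nat where "2 \<le> k" "c2 - c1 = real k * (1 - c1)"
proof -
  obtain k where "(c2 - c1) / (1 - c1) = real k" using assms(1) Nats_cases by metis
  then have k: "c2 - c1 = real k * (1 - c1)" using assms(2) by (simp add: divide_eq_eq)
  have "\<not> real k \<le> 1"
  proof
    assume "real k \<le> 1"
    then have "real k * (1 - c1) \<le> 1 - c1" using assms(2) mult_right_mono[of "real k" 1 "1 - c1"] by simp
    then show False using k assms(3) by linarith
  qed
  then have "2 \<le> k" by simp
  then show ?thesis using k by (rule that)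
qed

lemma corollary_parameters:
  fixes c1 c2 E :: real and k :: nat
  assumes c: "0 \<le> c1" "c1 < 1" "1 < c2" and k: "2 \<le> k" "c2 - c1 = real k * (1 - c1)"
    and E: "1 \<le> E" "c1 * E \<le> c2"
  defines "D \<equiv> (1 - c1) * E + c2 - 1"
  defines "lam \<equiv> (E - 1) / D" and "a \<equiv> E / (real k - 1 + E)"
    and "r1 \<equiv> c1 * (D / (c2 - c1))" and "r2 \<equiv> c2 / (c2 - c1) * (D / E)"
  shows "0 \<le> lam" "lam \<le> 1" "lam * c2 + (1 - lam) = E * (lam * c1 + (1 - lam))"
    and "r1 = c1 / (lam * c1 + (1 - lam))" "r2 = c2 / (lam * c2 + (1 - lam))" "r1 \<le> r2"
    and "0 \<le> r1" "0 < r2" "0 < a" "a < 1" "a * r2 = c2 / k" "(1 - a) * r1 = 1 - c2 / k"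
proof -
  have D: "0 < D" unfolding D_def using c E by (smt (verit) mult_nonneg_nonneg)
  have c21: "0 < c2 - c1" using c by simp
  have mix: "lam * c + (1 - lam) = (D + (E - 1) * (c - 1)) / D" for c
    using D by (simp add: lam_def field_simps)
  have m1: "lam * c1 + (1 - lam) = (c2 - c1) / D"
    unfolding mix by (simp add: D_def algebra_simps)
  have m2: "lam * c2 + (1 - lam) = E * (c2 - c1) / D"
    unfolding mix by (simp add: D_def algebra_simps)
  show "0 \<le> lam" using D E by (simp add: lam_def)
  show "lam \<le> 1" using D E c by (simp add: lam_def D_def field_simps)
  show "lam * c2 + (1 - lam) = E * (lam * c1 + (1 - lam))" unfolding m1 m2 by simp
  show "r1 = c1 / (lam * c1 + (1 - lam))" unfolding m1 r1_def by simp
  show "r2 = c2 / (lam * c2 + (1 - lam))" unfolding m2 r2_def by (simp add: field_simps)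
  have "r1 * E = c1 * E * (D / (c2 - c1))" by (simp add: r1_def)
  also have "\<dots> \<le> c2 * (D / (c2 - c1))" using E D c21 by (intro mult_right_mono) auto
  also have "\<dots> = r2 * E" using E by (simp add: r2_def)
  finally show "r1 \<le> r2" using E by simp
  show "0 \<le> r1" "0 < r2" unfolding r1_def r2_def using c E D c21 by simp_all
  have c2k: "c2 - 1 = (real k - 1) * (1 - c1)" using k(2) by (simp add: algebra_simps)
  have k1: "1 < real k" using k(1) by simp
  have kD: "real k - 1 + E = D / (1 - c1)"
    using c c2k by (simp add: D_def field_simps)
  show "0 < a" "a < 1" unfolding a_def using k1 E by simp_all
  have a': "a = E * (1 - c1) / D" unfolding a_def kD using c by simp
  have "a * r2 = c2 * (1 - c1) / (c2 - c1)"
    unfolding a' r2_def using D E c21 by (simp add: field_simps)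
  also have "\<dots> = c2 / k" unfolding k(2) using c by simp
  finally show "a * r2 = c2 / k" .
  have "1 - a = (c2 - 1) / D" unfolding a' using D by (simp add: D_def field_simps)
  then have "(1 - a) * r1 = c1 * ((real k - 1) * (1 - c1)) / (real k * (1 - c1))"
    unfolding r1_def c2k k(2)[symmetric] using D by simp
  also have "\<dots> = c1 * (real k - 1) / real k" using c by simp
  also have "\<dots> = 1 - c2 / k"
  proof -
    have "c2 = c1 + real k * (1 - c1)" using k(2) by simp
    then show ?thesis using k1 by (simp add: field_simps)
  qed
  finally show "(1 - a) * r1 = 1 - c2 / k" .
qed

lemma minimax_risk_eqI:
  assumes "Q\<^sub>0 \<in> Qs" and "(SUP P\<in>S. fdiv f P (Q\<^sub>0 P)) \<le> V"
    and "\<And>Q. Q \<in> Qs \<Longrightarrow> V \<le> (SUP P\<in>S. fdiv f P (Q P))"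
  shows "(SUP P\<in>S. fdiv f P (Q\<^sub>0 P)) = minimax_risk Qs S f" and "minimax_risk Qs S f = V"
proof -
  have "minimax_risk Qs S f \<le> (SUP P\<in>S. fdiv f P (Q\<^sub>0 P))"
    unfolding minimax_risk_def using assms(1) by (rule INF_lower)
  moreover have "V \<le> minimax_risk Qs S f"
    unfolding minimax_risk_def using assms(3) by (rule INF_greatest)
  ultimately show "(SUP P\<in>S. fdiv f P (Q\<^sub>0 P)) = minimax_risk Qs S f" "minimax_risk Qs S f = V"
    using assms(2) by (auto intro: antisym)
qed

theorem corollary1:
  fixes h :: "'a::euclidean_space \<Rightarrow> real"
    and c1 c2 \<epsilon> :: real
  assumes h_dens: "is_density h"
    and c1: "0 \<le> c1" "c1 < 1" and c2: "1 < c2"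
    and ratio: "(c2 - c1) / (1 - c1) \<in> \<nat>"
    and eps: "0 \<le> \<epsilon>"
    and beta: "\<exists>\<beta>\<ge>0. 1 + conj01 (g_eps \<epsilon>) (- exp \<beta>)
                 \<le> (c2 - c1 * exp \<beta>) * (1 - c1) / (c2 - c1)"
  defines "Qstar \<equiv> (let lam = (exp \<epsilon> - 1) / ((1 - c1) * exp \<epsilon> + c2 - 1) in
            (\<lambda>P. density lborel
              (\<lambda>x. ennreal lam * RN_deriv lborel P x + ennreal (1 - lam) * ennreal (h x))))"
    and "r1 \<equiv> c1 * (((1 - c1) * exp \<epsilon> + c2 - 1) / (c2 - c1))"
    and "r2 \<equiv> c2 / (c2 - c1) * (((1 - c1) * exp \<epsilon> + c2 - 1) / exp \<epsilon>)"
  shows "Qstar \<in> samplers (Pclass c1 c2 h) (g_eps \<epsilon>) \<and>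
         (\<forall>f. convex_on {0<..} f \<and> f 1 = 0 \<longrightarrow>
            (SUP P\<in>Pclass c1 c2 h. fdiv f P (Qstar P))
              = minimax_risk (samplers (Pclass c1 c2 h) (g_eps \<epsilon>)) (Pclass c1 c2 h) f \<and>
            minimax_risk (samplers (Pclass c1 c2 h) (g_eps \<epsilon>)) (Pclass c1 c2 h) f
              = ereal ((1 - r1) / (r2 - r1) * f r2) + ereal ((r2 - 1) / (r2 - r1)) * f_ext f r1)"
proof -
  obtain k :: nat where k: "2 \<le> k" "c2 - c1 = real k * (1 - c1)"
    using ratio c1(2) c2 by (rule Nats_ratio_obtain)
  obtain \<beta> where "0 \<le> \<beta>"
    and "1 + conj01 (g_eps \<epsilon>) (- exp \<beta>) \<le> (c2 - c1 * exp \<beta>) * (1 - c1) / (c2 - c1)"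
    using beta by blast
  then have cE: "c1 * exp \<epsilon> \<le> c2"
    using c1_exp_le_c2_of_beta_condition[OF c1 _ k(2) eps] k(1) by simp
  define lam where "lam = (exp \<epsilon> - 1) / ((1 - c1) * exp \<epsilon> + c2 - 1)"
  define a where "a = exp \<epsilon> / (real k - 1 + exp \<epsilon>)"
  have "1 \<le> exp \<epsilon>" using eps by simp
  note par = corollary_parameters[OF c1 c2 k this cE, folded lam_def a_def r1_def r2_def]
  note lam = par(1,2) and ldp = par(3) and r = par(4-8) and a = par(9-12)
  have a_sum: "a * r2 + (1 - a) * r1 = 1" using a(3,4) by simp
  have Qstar: "Qstar = mixture_sampler lam h"
    unfolding Qstar_def mixture_sampler_def lam_def Let_def ..
  have samp: "Qstar \<in> samplers (Pclass c1 c2 h) (g_eps \<epsilon>)"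
    unfolding Qstar using mixture_sampler_in_samplers[OF h_dens lam eps ldp] .
  show ?thesis
  proof (intro conjI allI impI samp)
    fix f :: "real \<Rightarrow> real" assume "convex_on {0<..} f \<and> f 1 = 0"
    then have cf: "convex_on {0<..} f" and f1: "f 1 = 0" by auto
    have weights: "ereal ((1 - r1) / (r2 - r1) * f r2) + ereal ((r2 - 1) / (r2 - r1)) * f_ext f r1
        = ereal (a * f r2) + ereal (1 - a) * f_ext f r1"
      by (rule chord_weights[where f = f, OF a(2) a_sum r(3) f1])
    have upper: "(SUP P\<in>Pclass c1 c2 h. fdiv f P (Qstar P)) \<le> ereal (a * f r2) + ereal (1 - a) * f_ext f r1"
      unfolding Qstar using c1 c2
      by (intro SUP_least fdiv_mixture_sampler_le[OF h_dens _ _ _ lam r(1-3) a(2) a_sum cf f1]) auto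
    have lower: "ereal (a * f r2) + ereal (1 - a) * f_ext f r1 \<le> (SUP P\<in>Pclass c1 c2 h. fdiv f P (Q P))"
      if "Q \<in> samplers (Pclass c1 c2 h) (g_eps \<epsilon>)" for Q
      using c1 c2 k r(3-5) a(1,2)
      by (intro chord_value_le_of_affine_minorants[OF cf] minimax_lower_bound_affine[OF h_dens _ _ k(2) _ that cf]
          a_def a(3,4)) auto
    show "(SUP P\<in>Pclass c1 c2 h. fdiv f P (Qstar P))
          = minimax_risk (samplers (Pclass c1 c2 h) (g_eps \<epsilon>)) (Pclass c1 c2 h) f"
      and "minimax_risk (samplers (Pclass c1 c2 h) (g_eps \<epsilon>)) (Pclass c1 c2 h) f
          = ereal ((1 - r1) / (r2 - r1) * f r2) + ereal ((r2 - 1) / (r2 - r1)) * f_ext f r1"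
      using minimax_risk_eqI[OF samp upper lower] weights by simp_all
  qed
qed

end
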